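(* For any $\vec s\in\mathbb Z^k$ and $\vec r\in\mathbb Z_{>0}^k$, the function $\varepsilon\mapsto Z(\vec s;\vec r;\varepsilon)$ (defined for $\mathrm{Re}\,\varepsilon<0$) lies in $\mathbb C\{\{\varepsilon,\varepsilon^{-1}\}[\ln(-\varepsilon)]$. If moreover $\vec s\in\mathbb Z_{\le0}^k$, then it lies in $\mathbb C\{\{\varepsilon,\varepsilon^{-1}\}$.
   Context: $Z(\vec s;\vec r;\varepsilon)=\sum_{n_1>\dots>n_k>0}e^{\varepsilon(n_1r_1+\dots+n_kr_k)}n_1^{-s_1}\cdots n_k^{-s_k}$ for $\mathrm{Re}\,\varepsilon<0$. $\mathbb C\{\{\varepsilon,\varepsilon^{-1}\}$ is the algebra of convergent Laurent series at $0$ (with finitely many negative powers), regarded as germs of functions meromorphic near $\varepsilon=0$; $\ln$ is the branch analytic on $\mathbb C\setminus(-\infty,0]$. Membership means that on some region of $\{\mathrm{Re}\,\varepsilon<0\}$ near $0$, $Z$ agrees with $\sum_{n=0}^M a_n(\varepsilon)\ln^n(-\varepsilon)$ for some $a_n\in\mathbb C\{\{\varepsilon,\varepsilon^{-1}\}$. *)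

theory Defs
  imports "HOL-Analysis.Analysis"
begin

definition mz_index :: "nat \<Rightarrow> nat list set" where
  "mz_index k = {n. length n = k \<and> sorted_wrt (>) n \<and> (\<forall>x\<in>set n. 0 < x)}"

definition mz_term :: "int list \<Rightarrow> nat list \<Rightarrow> complex \<Rightarrow> nat list \<Rightarrow> complex" where
  "mz_term s r eps n =
     (\<Prod>i<length s. exp (eps * of_nat (n ! i * r ! i)) * (of_nat (n ! i)) powi (- (s ! i)))"

text \<open>Z(s; r; eps), meaningful for Re eps < 0 (absolutely convergent there).\<close>
definition Zfun :: "int list \<Rightarrow> nat list \<Rightarrow> complex \<Rightarrow> complex" where
  "Zfun s r eps = (\<Sum>\<^sub>\<infinity> n\<in>mz_index (length s). mz_term s r eps n)"

definition conv_laurent :: "(complex \<Rightarrow> complex) \<Rightarrow> bool" where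
  "conv_laurent a \<longleftrightarrow> (\<exists>R>0. \<exists>N::nat. \<exists>c::nat \<Rightarrow> complex.
      \<forall>z. 0 < norm z \<and> norm z < R \<longrightarrow> (\<lambda>m. c m * z powi (int m - int N)) sums a z)"

definition in_laurent_log :: "(complex \<Rightarrow> complex) \<Rightarrow> bool" where
  "in_laurent_log f \<longleftrightarrow> (\<exists>M::nat. \<exists>a::nat \<Rightarrow> complex \<Rightarrow> complex. (\<forall>j\<le>M. conv_laurent (a j)) \<and>
      (\<exists>\<delta>>0. \<forall>eps. Re eps < 0 \<and> norm eps < \<delta> \<longrightarrow>
          f eps = (\<Sum>j\<le>M. a j eps * (Ln (- eps)) ^ j)))"

definition in_laurent :: "(complex \<Rightarrow> complex) \<Rightarrow> bool" where
  "in_laurent f \<longleftrightarrow> (\<exists>a. conv_laurent a \<and>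
      (\<exists>\<delta>>0. \<forall>eps. Re eps < 0 \<and> norm eps < \<delta> \<longrightarrow> f eps = a eps))"

end

theory Submission
  imports Defs "HOL-Complex_Analysis.Complex_Analysis" "HOL-Real_Asymp.Real_Asymp"
begin

text \<open>
  \<open>Z\<close> is the limit of the partial sums over \<open>b > n_1 > ... > n_k > 0\<close>. Differentiating
  termwise in \<open>\<epsilon>\<close> lowers one exponent \<open>s_i\<close> by one (with a factor \<open>r_i\<close>), and log-Laurent
  germs are closed under primitives: a Laurent series integrates to a Laurent series plus a
  multiple of \<open>ln(-\<epsilon>)\<close>, and powers of \<open>ln(-\<epsilon>)\<close> are handled by parts. By descent on
  \<open>s_1 + ... + s_k\<close> it therefore suffices to treat series with some \<open>s_i = -p \<le> 0\<close>.
  Summing out \<open>n_i\<close> between its neighbours gives a difference of two tails of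
  \<open>\<Sum>_n n^p e^(\<epsilon> r n)\<close>, and the tail beyond \<open>m\<close> expands binomially as
  \<open>\<Sum>_e (p choose e) A_e(\<epsilon>) m^(p-e) e^(\<epsilon> r m)\<close> with the Laurent germs
  \<open>A_e(\<epsilon>) = \<Sum>_(n\<ge>1) n^e e^(\<epsilon> r n)\<close>. The factors depending on the neighbour merge into its
  own factor (for \<open>i = 1\<close> the upper tail tends to 0 instead), so \<open>Z\<close> becomes a combination,
  with Laurent coefficients, of series of depth \<open>k - 1\<close> whose exponents are bounded by the
  old ones. Induction on the depth concludes, and when all \<open>s_i \<le> 0\<close> the argument never
  leaves the Laurent germs.
\<close>

section \<open>Nested exponential sums\<close>

definition mz_factor :: "int \<times> nat \<Rightarrow> complex \<Rightarrow> nat \<Rightarrow> complex" where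
  "mz_factor q z n = exp (z * of_nat (n * snd q)) * of_nat n powi (- fst q)"

primrec mz_partial :: "(int \<times> nat) list \<Rightarrow> complex \<Rightarrow> nat \<Rightarrow> complex" where
  "mz_partial [] z b = 1"
| "mz_partial (q # qs) z b = (\<Sum>n\<in>{1..<b}. mz_factor q z n * mz_partial qs z n)"

definition mz_prod :: "(int \<times> nat) list \<Rightarrow> complex \<Rightarrow> nat list \<Rightarrow> complex" where
  "mz_prod qs z n = (\<Prod>i<length qs. mz_factor (qs ! i) z (n ! i))"

definition mz_series :: "(int \<times> nat) list \<Rightarrow> complex \<Rightarrow> complex" where
  "mz_series qs z = (\<Sum>\<^sub>\<infinity> n\<in>mz_index (length qs). mz_prod qs z n)"

lemma Zfun_eq_mz_series:
  assumes "length r = length s"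
  shows "Zfun s r = mz_series (zip s r)"
  using assms by (simp add: fun_eq_iff Zfun_def mz_series_def mz_prod_def mz_term_def mz_factor_def)

primrec mz_degree :: "(int \<times> nat) list \<Rightarrow> nat" where
  "mz_degree [] = 0"
| "mz_degree (q # qs) = nat \<bar>fst q\<bar> + mz_degree qs + 1"

lemma powi_le_power_abs:
  fixes x :: real
  assumes "1 \<le> x"
  shows "x powi m \<le> x ^ nat \<bar>m\<bar>"
proof (cases "m \<ge> 0")
  case True
  then show ?thesis by (simp add: power_int_def)
next
  case False
  have "x powi m = inverse (x ^ nat (- m))"
    using False by (simp add: power_int_def power_inverse)
  also have "\<dots> \<le> 1" using assms by (simp add: inverse_le_1_iff one_le_power)
  also have "1 \<le> x ^ nat \<bar>m\<bar>" using assms by (simp add: one_le_power)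
  finally show ?thesis .
qed

lemma norm_mz_factor:
  "norm (mz_factor q z n) = exp (Re z * real (n * snd q)) * real n powi (- fst q)"
  by (simp add: mz_factor_def norm_mult norm_power_int)

lemma norm_mz_factor_le:
  assumes "Re z \<le> 0" "1 \<le> n"
  shows "norm (mz_factor q z n) \<le> real n ^ nat \<bar>fst q\<bar>"
proof -
  have "exp (Re z * real (n * snd q)) \<le> 1"
    using assms by (simp add: mult_nonpos_nonneg)
  moreover have "real n powi (- fst q) \<le> real n ^ nat \<bar>fst q\<bar>"
    using powi_le_power_abs[of "real n" "- fst q"] assms by simp
  ultimately show ?thesis
    unfolding norm_mz_factor using mult_mono[of _ 1 "real n powi (- fst q)"] by fastforce
qed

lemma norm_mz_factor_le_exp:
  assumes "Re z \<le> c" "c < 0" "0 < snd q" "1 \<le> n"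
  shows "norm (mz_factor q z n) \<le> real n ^ nat \<bar>fst q\<bar> * exp c ^ n"
proof -
  have "Re z * real (n * snd q) \<le> c * real (n * snd q)"
    using assms by (intro mult_right_mono) auto
  also have "\<dots> \<le> c * real n"
    using assms by (intro mult_left_mono_neg) auto
  finally have "exp (Re z * real (n * snd q)) \<le> exp c ^ n"
    by (simp add: exp_of_nat_mult[symmetric] mult.commute)
  moreover have "real n powi (- fst q) \<le> real n ^ nat \<bar>fst q\<bar>"
    using powi_le_power_abs[of "real n" "- fst q"] assms by simp
  ultimately show ?thesis
    unfolding norm_mz_factor by (subst mult.commute) (intro mult_mono, auto)
qed

definition mz_index_below :: "nat \<Rightarrow> nat \<Rightarrow> nat list set" where
  "mz_index_below k N = {n \<in> mz_index k. \<forall>x\<in>set n. x < N}"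

lemma finite_mz_index_below: "finite (mz_index_below k N)"
proof (rule finite_subset)
  show "mz_index_below k N \<subseteq> {xs. set xs \<subseteq> {..<N} \<and> length xs = k}"
    by (auto simp: mz_index_below_def mz_index_def)
qed (simp add: finite_lists_length_eq)

lemma mz_index_below_0: "mz_index_below 0 N = {[]}"
  by (auto simp: mz_index_below_def mz_index_def)

lemma mz_index_below_Suc:
  "mz_index_below (Suc k) N = (\<lambda>(n, l). n # l) ` (SIGMA n:{1..<N}. mz_index_below k n)"
  by (auto simp: mz_index_below_def mz_index_def length_Suc_conv image_iff)
     (meson less_trans)

lemma sum_mz_index_below_Suc:
  "(\<Sum>l\<in>mz_index_below (Suc k) N. f l) = (\<Sum>n\<in>{1..<N}. \<Sum>l\<in>mz_index_below k n. f (n # l))"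
proof -
  have "inj_on (\<lambda>(n, l). n # l) (SIGMA n:{1..<N}. mz_index_below k n)"
    by (auto simp: inj_on_def)
  then have "(\<Sum>l\<in>mz_index_below (Suc k) N. f l)
      = (\<Sum>(n, l)\<in>(SIGMA n:{1..<N}. mz_index_below k n). f (n # l))"
    unfolding mz_index_below_Suc by (subst sum.reindex) (simp_all add: case_prod_beta)
  also have "\<dots> = (\<Sum>n\<in>{1..<N}. \<Sum>l\<in>mz_index_below k n. f (n # l))"
    by (rule sum.Sigma[symmetric]) (auto simp: finite_mz_index_below)
  finally show ?thesis .
qed

lemma mz_prod_Cons: "mz_prod (q # qs) z (n # l) = mz_factor q z n * mz_prod qs z l"
  unfolding mz_prod_def length_Cons prod.lessThan_Suc_shift by simp

lemma sum_mz_prod_eq_mz_partial: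
  "(\<Sum>l\<in>mz_index_below (length qs) N. mz_prod qs z l) = mz_partial qs z N"
proof (induction qs arbitrary: N)
  case Nil
  then show ?case by (simp add: mz_index_below_0 mz_prod_def)
next
  case (Cons q qs)
  then show ?case
    by (simp only: length_Cons sum_mz_index_below_Suc mz_prod_Cons mz_partial.simps
        sum_distrib_left[symmetric])
qed

lemma sum_norm_mz_prod_le:
  assumes "Re z \<le> 0"
  shows "(\<Sum>l\<in>mz_index_below (length qs) N. norm (mz_prod qs z l)) \<le> real N ^ mz_degree qs"
proof (induction qs arbitrary: N)
  case Nil
  then show ?case by (simp add: mz_index_below_0 mz_prod_def)
next
  case (Cons q qs)
  define K where "K = nat \<bar>fst q\<bar> + mz_degree qs"
  have "(\<Sum>l\<in>mz_index_below (length (q # qs)) N. norm (mz_prod (q # qs) z l))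
      = (\<Sum>n\<in>{1..<N}. norm (mz_factor q z n) *
           (\<Sum>l\<in>mz_index_below (length qs) n. norm (mz_prod qs z l)))"
    by (simp add: sum_mz_index_below_Suc mz_prod_Cons norm_mult sum_distrib_left)
  also have "\<dots> \<le> (\<Sum>n\<in>{1..<N}. real N ^ K)"
  proof (intro sum_mono)
    fix n assume n: "n \<in> {1..<N}"
    have "norm (mz_factor q z n) * (\<Sum>l\<in>mz_index_below (length qs) n. norm (mz_prod qs z l))
        \<le> real n ^ nat \<bar>fst q\<bar> * real n ^ mz_degree qs"
      using n assms Cons.IH[of n] norm_mz_factor_le[of z n q]
      by (intro mult_mono) (auto intro: sum_nonneg)
    also have "\<dots> \<le> real N ^ K"
      using n by (simp add: K_def power_add[symmetric] power_mono)
    finally show "norm (mz_factor q z n) * (\<Sum>l\<in>mz_index_below (length qs) n. norm (mz_prod qs z l))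
        \<le> real N ^ K" .
  qed
  also have "\<dots> \<le> real N ^ mz_degree (q # qs)"
    by (simp add: K_def mult_right_mono)
  finally show ?case .
qed

lemma norm_mz_partial_le:
  assumes "Re z \<le> 0"
  shows "norm (mz_partial qs z N) \<le> real N ^ mz_degree qs"
  using norm_sum[of "mz_prod qs z" "mz_index_below (length qs) N"] sum_norm_mz_prod_le[OF assms, of qs N]
  by (simp add: sum_mz_prod_eq_mz_partial)

lemma summable_power_mult_geometric:
  fixes q :: real
  assumes "0 < q" "q < 1"
  shows "summable (\<lambda>n. real n ^ m * q ^ n)"
proof -
  define a where "a = sqrt q"
  have a: "0 < a" "a < 1" using assms by (auto simp: a_def real_sqrt_lt_1_iff)
  have "(\<lambda>n. real n ^ m * a ^ n) \<longlonglongrightarrow> 0" using a by real_asymp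
  then have "eventually (\<lambda>n. norm (real n ^ m * a ^ n) < 1) sequentially"
    by (rule order_tendstoD(2)[OF tendsto_norm_zero]) simp
  then have "eventually (\<lambda>n. norm (real n ^ m * q ^ n) \<le> a ^ n) sequentially"
  proof eventually_elim
    case (elim n)
    have "q ^ n = a ^ n * a ^ n"
      using assms by (simp add: a_def power_mult_distrib[symmetric])
    then have "norm (real n ^ m * q ^ n) = norm (real n ^ m * a ^ n) * a ^ n"
      using a by (simp add: abs_mult)
    also have "\<dots> \<le> 1 * a ^ n" using elim a by (intro mult_right_mono) auto
    finally show ?case by simp
  qed
  then show ?thesis
    by (rule summable_comparison_test_ev) (use a in \<open>auto intro: summable_geometric\<close>)
qed

lemma summable_power_mult_exp:
  assumes "c < 0"
  shows "summable (\<lambda>n. real n ^ m * exp c ^ n)"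
  using assms by (intro summable_power_mult_geometric) auto

lemma bounded_sum_norm_mz_prod:
  assumes "Re z < 0" "\<forall>q\<in>set qs. 0 < snd q"
  obtains C where "\<And>N. (\<Sum>l\<in>mz_index_below (length qs) N. norm (mz_prod qs z l)) \<le> C"
proof (cases qs)
  case Nil
  then show ?thesis using that by (auto simp: mz_index_below_0 mz_prod_def)
next
  case (Cons q qs')
  define K where "K = nat \<bar>fst q\<bar> + mz_degree qs'"
  define M where "M n = real n ^ K * exp (Re z) ^ n" for n
  have "summable M"
    unfolding M_def by (rule summable_power_mult_exp) (use assms in auto)
  have "(\<Sum>l\<in>mz_index_below (length qs) N. norm (mz_prod qs z l)) \<le> suminf M" for N
  proof -
    have "(\<Sum>l\<in>mz_index_below (length qs) N. norm (mz_prod qs z l))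
        = (\<Sum>n\<in>{1..<N}. norm (mz_factor q z n) *
             (\<Sum>l\<in>mz_index_below (length qs') n. norm (mz_prod qs' z l)))"
      by (simp add: Cons sum_mz_index_below_Suc mz_prod_Cons norm_mult sum_distrib_left)
    also have "\<dots> \<le> (\<Sum>n\<in>{1..<N}. M n)"
    proof (intro sum_mono)
      fix n assume n: "n \<in> {1..<N}"
      have "norm (mz_factor q z n) * (\<Sum>l\<in>mz_index_below (length qs') n. norm (mz_prod qs' z l))
          \<le> (real n ^ nat \<bar>fst q\<bar> * exp (Re z) ^ n) * real n ^ mz_degree qs'"
        using n assms Cons norm_mz_factor_le_exp[of z "Re z" q n] sum_norm_mz_prod_le[of z qs' n]
        by (intro mult_mono) (auto intro: sum_nonneg)
      then show "norm (mz_factor q z n) * (\<Sum>l\<in>mz_index_below (length qs') n. norm (mz_prod qs' z l))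
          \<le> M n"
        by (simp add: M_def K_def power_add mult_ac)
    qed
    also have "\<dots> \<le> suminf M"
      by (intro sum_le_suminf \<open>summable M\<close>) (auto simp: M_def)
    finally show ?thesis .
  qed
  then show ?thesis using that by blast
qed

lemma mz_prod_has_sum:
  assumes "Re z < 0" "\<forall>q\<in>set qs. 0 < snd q"
  shows "(mz_prod qs z has_sum mz_series qs z) (mz_index (length qs))"
proof -
  obtain C where C: "\<And>N. (\<Sum>l\<in>mz_index_below (length qs) N. norm (mz_prod qs z l)) \<le> C"
    using bounded_sum_norm_mz_prod[OF assms] by blast
  have cover: "\<exists>N. F \<subseteq> mz_index_below (length qs) N"
    if "finite F" "F \<subseteq> mz_index (length qs)" for F
  proof -
    have "finite (\<Union>l\<in>F. set l)" using that by simp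
    then obtain N where "(\<Union>l\<in>F. set l) \<subseteq> {..<N}"
      using finite_nat_bounded by blast
    then have "F \<subseteq> mz_index_below (length qs) N"
      using that unfolding mz_index_below_def by blast
    then show ?thesis ..
  qed
  then have "bdd_above (sum (\<lambda>l. norm (mz_prod qs z l)) ` {F. F \<subseteq> mz_index (length qs) \<and> finite F})"
  proof (intro bdd_aboveI2)
    fix F assume "F \<in> {F. F \<subseteq> mz_index (length qs) \<and> finite F}"
    with cover obtain N where "F \<subseteq> mz_index_below (length qs) N" by blast
    then have "(\<Sum>l\<in>F. norm (mz_prod qs z l))
        \<le> (\<Sum>l\<in>mz_index_below (length qs) N. norm (mz_prod qs z l))"
      by (intro sum_mono2 finite_mz_index_below) auto
    then show "(\<Sum>l\<in>F. norm (mz_prod qs z l)) \<le> C" using C order_trans by blast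
  qed
  then have "(\<lambda>l. norm (mz_prod qs z l)) summable_on mz_index (length qs)"
    by (rule nonneg_bdd_above_summable_on[rotated]) simp
  then have "mz_prod qs z summable_on mz_index (length qs)"
    by (rule abs_summable_summable)
  then show ?thesis
    unfolding mz_series_def by (rule has_sum_infsum)
qed

lemma mz_partial_tendsto:
  assumes "Re z < 0" "\<forall>q\<in>set qs. 0 < snd q"
  shows "(\<lambda>N. mz_partial qs z N) \<longlonglongrightarrow> mz_series qs z"
proof -
  have "filterlim (mz_index_below (length qs)) (finite_subsets_at_top (mz_index (length qs))) sequentially"
    unfolding filterlim_finite_subsets_at_top
  proof (intro allI impI)
    fix X assume X: "finite X \<and> X \<subseteq> mz_index (length qs)"
    have "finite (\<Union>l\<in>X. set l)" using X by simp
    then obtain N0 where "(\<Union>l\<in>X. set l) \<subseteq> {..<N0}"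
      using finite_nat_bounded by blast
    then have X_below: "X \<subseteq> mz_index_below (length qs) N" if "N \<ge> N0" for N
      using X that by (force simp: mz_index_below_def)
    have below: "mz_index_below (length qs) N \<subseteq> mz_index (length qs)" for N
      by (auto simp: mz_index_below_def)
    show "\<forall>\<^sub>F N in sequentially. finite (mz_index_below (length qs) N) \<and>
        X \<subseteq> mz_index_below (length qs) N \<and> mz_index_below (length qs) N \<subseteq> mz_index (length qs)"
      using eventually_ge_at_top[of N0]
      by (rule eventually_mono) (use X_below below finite_mz_index_below in blast)
  qed
  from filterlim_compose[OF mz_prod_has_sum[OF assms, unfolded has_sum_def] this]
  show ?thesis by (simp add: sum_mz_prod_eq_mz_partial)
qed

lemma mz_series_Nil [simp]: "mz_series [] z = 1"
proof -
  have "mz_index 0 = {[]}" by (auto simp: mz_index_def)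
  then show ?thesis by (simp add: mz_series_def mz_prod_def)
qed

definition lower_exponent :: "nat \<Rightarrow> (int \<times> nat) list \<Rightarrow> (int \<times> nat) list" where
  "lower_exponent i qs = qs[i := (fst (qs ! i) - 1, snd (qs ! i))]"

lemma lower_exponent_Cons_0 [simp]: "lower_exponent 0 (q # qs) = (fst q - 1, snd q) # qs"
  by (simp add: lower_exponent_def)

lemma lower_exponent_Cons_Suc [simp]: "lower_exponent (Suc i) (q # qs) = q # lower_exponent i qs"
  by (simp add: lower_exponent_def)

lemma length_lower_exponent [simp]: "length (lower_exponent i qs) = length qs"
  by (simp add: lower_exponent_def)

lemma lower_exponent_pos:
  assumes "\<forall>q\<in>set qs. 0 < snd q"
  shows "\<forall>q\<in>set (lower_exponent i qs). 0 < snd q"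
proof (cases "i < length qs")
  case True
  have "set (lower_exponent i qs) \<subseteq> insert (fst (qs ! i) - 1, snd (qs ! i)) (set qs)"
    by (simp add: lower_exponent_def set_update_subset_insert)
  with True assms show ?thesis by auto
qed (use assms in \<open>simp add: lower_exponent_def list_update_beyond\<close>)

lemma sum_list_fst_lower_exponent:
  "i < length qs \<Longrightarrow> sum_list (map fst (lower_exponent i qs)) = sum_list (map fst qs) - 1"
  by (induction qs arbitrary: i) (auto split: nat.split_asm simp: less_Suc_eq_0_disj)

lemma has_field_derivative_mz_factor:
  assumes "1 \<le> n"
  shows "((\<lambda>z. mz_factor q z n) has_field_derivative
           of_nat (snd q) * mz_factor (fst q - 1, snd q) z n) (at z)"
proof -
  have "(of_nat n :: complex) powi (- (fst q - 1)) = of_nat n powi (- fst q + 1)"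
    by simp
  also have "\<dots> = of_nat n powi (- fst q) * of_nat n"
    using assms by (subst power_int_add) auto
  finally have "(of_nat n :: complex) powi (- (fst q - 1)) = of_nat n powi (- fst q) * of_nat n" .
  then have eq: "exp (z * of_nat (n * snd q)) * of_nat (n * snd q) * (of_nat n) powi (- fst q)
      = of_nat (snd q) * mz_factor (fst q - 1, snd q) z n"
    by (simp add: mz_factor_def mult_ac)
  have "((\<lambda>z. mz_factor q z n) has_field_derivative
      exp (z * of_nat (n * snd q)) * of_nat (n * snd q) * (of_nat n) powi (- fst q)) (at z)"
    unfolding mz_factor_def by (auto intro!: derivative_eq_intros)
  then show ?thesis by (simp only: eq)
qed

lemma has_field_derivative_mz_partial:
  "((\<lambda>z. mz_partial qs z b) has_field_derivative
     (\<Sum>i<length qs. of_nat (snd (qs ! i)) * mz_partial (lower_exponent i qs) z b)) (at z)"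
proof (induction qs arbitrary: b)
  case Nil
  then show ?case by simp
next
  case (Cons q qs)
  define D where "D n = (\<Sum>i<length qs. of_nat (snd (qs ! i)) * mz_partial (lower_exponent i qs) z n)"
    for n
  have "((\<lambda>z. mz_partial (q # qs) z b) has_field_derivative
      (\<Sum>n\<in>{1..<b}. of_nat (snd q) * mz_factor (fst q - 1, snd q) z n * mz_partial qs z n
         + D n * mz_factor q z n)) (at z)"
    unfolding mz_partial.simps
    by (intro DERIV_sum DERIV_mult has_field_derivative_mz_factor Cons.IH[unfolded D_def[symmetric]])
       auto
  also have "(\<Sum>n\<in>{1..<b}. of_nat (snd q) * mz_factor (fst q - 1, snd q) z n * mz_partial qs z n
         + D n * mz_factor q z n)
      = (\<Sum>i<length (q # qs). of_nat (snd ((q # qs) ! i)) *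
           mz_partial (lower_exponent i (q # qs)) z b)"
    unfolding length_Cons sum.lessThan_Suc_shift
    by (simp add: D_def sum.distrib sum_distrib_left sum_distrib_right mult_ac sum.swap[of _ "{..<_}"])
  finally show ?case .
qed

definition mz_increment :: "(int \<times> nat) list \<Rightarrow> nat \<Rightarrow> complex \<Rightarrow> complex" where
  "mz_increment qs n z = mz_partial qs z (Suc (Suc n)) - mz_partial qs z (Suc n)"

lemma norm_mz_increment_le:
  assumes "qs \<noteq> []" "\<forall>q\<in>set qs. 0 < snd q" "Re z \<le> c" "c < 0"
  shows "norm (mz_increment qs n z) \<le> real (Suc n) ^ mz_degree qs * exp c ^ Suc n"
proof -
  obtain q qs' where qs: "qs = q # qs'" using assms(1) by (cases qs) auto
  have "norm (mz_increment qs n z) = norm (mz_factor q z (Suc n)) * norm (mz_partial qs' z (Suc n))"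
    by (simp add: mz_increment_def qs norm_mult)
  also have "\<dots> \<le> (real (Suc n) ^ nat \<bar>fst q\<bar> * exp c ^ Suc n) * real (Suc n) ^ mz_degree qs'"
    using assms qs norm_mz_factor_le_exp[of z c q "Suc n"] norm_mz_partial_le[of z qs' "Suc n"]
    by (intro mult_mono) auto
  also have "\<dots> \<le> real (Suc n) ^ mz_degree qs * exp c ^ Suc n"
    by (simp add: qs power_add mult_ac mult_right_mono)
  finally show ?thesis .
qed

lemma mz_increment_sums:
  assumes "Re z < 0" "\<forall>q\<in>set qs. 0 < snd q" "qs \<noteq> []"
  shows "(\<lambda>n. mz_increment qs n z) sums mz_series qs z"
proof -
  have "mz_partial qs z 1 = 0" using assms(3) by (cases qs) auto
  with telescope_sums[OF LIMSEQ_Suc[OF mz_partial_tendsto[OF assms(1,2)]]] show ?thesis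
    by (simp add: mz_increment_def)
qed

lemma has_field_derivative_mz_increment:
  "(mz_increment qs n has_field_derivative
     (\<Sum>i<length qs. of_nat (snd (qs ! i)) * mz_increment (lower_exponent i qs) n z)) (at z)"
proof -
  have "((\<lambda>z. mz_partial qs z (Suc (Suc n)) - mz_partial qs z (Suc n)) has_field_derivative
      (\<Sum>i<length qs. of_nat (snd (qs ! i)) * mz_partial (lower_exponent i qs) z (Suc (Suc n)))
      - (\<Sum>i<length qs. of_nat (snd (qs ! i)) * mz_partial (lower_exponent i qs) z (Suc n))) (at z)"
    by (intro DERIV_diff has_field_derivative_mz_partial)
  also have "(\<Sum>i<length qs. of_nat (snd (qs ! i)) * mz_partial (lower_exponent i qs) z (Suc (Suc n)))
      - (\<Sum>i<length qs. of_nat (snd (qs ! i)) * mz_partial (lower_exponent i qs) z (Suc n))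
      = (\<Sum>i<length qs. of_nat (snd (qs ! i)) * mz_increment (lower_exponent i qs) n z)"
    by (simp add: mz_increment_def right_diff_distrib sum_subtractf)
  finally show ?thesis
    unfolding mz_increment_def[abs_def] .
qed

lemma uniformly_convergent_mz_increment_derivs:
  assumes "qs \<noteq> []" "\<forall>q\<in>set qs. 0 < snd q" "c < 0"
  shows "uniformly_convergent_on {z. Re z < c}
    (\<lambda>N z. \<Sum>n<N. \<Sum>i<length qs. of_nat (snd (qs ! i)) * mz_increment (lower_exponent i qs) n z)"
proof (rule Weierstrass_m_test')
  fix n z assume z: "z \<in> {z. Re z < c}"
  have "lower_exponent i qs \<noteq> []" for i
    using assms(1) by (simp add: lower_exponent_def)
  then have "norm (mz_increment (lower_exponent i qs) n z)
      \<le> real (Suc n) ^ mz_degree (lower_exponent i qs) * exp c ^ Suc n" for i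
    using lower_exponent_pos[OF assms(2)] z assms(3) by (intro norm_mz_increment_le) auto
  then have "norm (of_nat (snd (qs ! i)) * mz_increment (lower_exponent i qs) n z)
      \<le> real (snd (qs ! i)) * (real (Suc n) ^ mz_degree (lower_exponent i qs) * exp c ^ Suc n)" for i
    by (simp add: norm_mult mult_left_mono)
  then show "norm (\<Sum>i<length qs. of_nat (snd (qs ! i)) * mz_increment (lower_exponent i qs) n z)
      \<le> (\<Sum>i<length qs. real (snd (qs ! i)) *
           (real (Suc n) ^ mz_degree (lower_exponent i qs) * exp c ^ Suc n))"
    by (intro order_trans[OF norm_sum] sum_mono)
next
  have "summable (\<lambda>n. real (Suc n) ^ m * exp c ^ Suc n)" for m
    using summable_power_mult_exp[OF assms(3), of m] by (subst summable_Suc_iff)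
  then show "summable (\<lambda>n. \<Sum>i<length qs. real (snd (qs ! i)) *
      (real (Suc n) ^ mz_degree (lower_exponent i qs) * exp c ^ Suc n))"
    by (intro summable_sum summable_mult)
qed

lemma has_field_derivative_mz_series:
  assumes "Re z < 0" "\<forall>q\<in>set qs. 0 < snd q"
  shows "(mz_series qs has_field_derivative
           (\<Sum>i<length qs. of_nat (snd (qs ! i)) * mz_series (lower_exponent i qs) z)) (at z)"
proof (cases "qs = []")
  case True
  have "mz_series [] = (\<lambda>_. 1)" by (simp add: fun_eq_iff)
  then show ?thesis using True by simp
next
  case False
  define c where "c = Re z / 2"
  define S where "S = {x. Re x < c}"
  have S: "open S" "convex S"
    unfolding S_def by (rule open_halfspace_Re_lt, rule convex_halfspace_Re_lt)
  have c: "c < 0" "z \<in> S"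
    using assms(1) by (auto simp: c_def S_def)
  have nonempty: "lower_exponent i qs \<noteq> []" for i
    using False by (simp add: lower_exponent_def)
  have D: "((\<lambda>x. \<Sum>n. mz_increment qs n x) has_field_derivative
      (\<Sum>n. \<Sum>i<length qs. of_nat (snd (qs ! i)) * mz_increment (lower_exponent i qs) n z)) (at z)"
  proof (rule has_field_derivative_series'(2)[where f = "mz_increment qs" and
        f' = "\<lambda>n x. \<Sum>i<length qs. of_nat (snd (qs ! i)) * mz_increment (lower_exponent i qs) n x",
        OF S(2) _ _ c(2)])
    show "(mz_increment qs n has_field_derivative
        (\<Sum>i<length qs. of_nat (snd (qs ! i)) * mz_increment (lower_exponent i qs) n x)) (at x within S)"
      for n x
      by (rule has_field_derivative_at_within[OF has_field_derivative_mz_increment])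
    show "uniformly_convergent_on S (\<lambda>N x. \<Sum>n<N. \<Sum>i<length qs.
        of_nat (snd (qs ! i)) * mz_increment (lower_exponent i qs) n x)"
      unfolding S_def by (rule uniformly_convergent_mz_increment_derivs[OF False assms(2) c(1)])
    show "summable (\<lambda>n. mz_increment qs n z)"
      by (rule sums_summable[OF mz_increment_sums[OF assms False]])
    show "z \<in> interior S"
      using S(1) c(2) by (simp add: interior_open)
  qed
  have "(\<lambda>n. \<Sum>i<length qs. of_nat (snd (qs ! i)) * mz_increment (lower_exponent i qs) n z)
      sums (\<Sum>i<length qs. of_nat (snd (qs ! i)) * mz_series (lower_exponent i qs) z)"
    by (intro sums_sum sums_mult mz_increment_sums assms(1) lower_exponent_pos assms(2) nonempty)
  then have series_value:
    "(\<Sum>n. \<Sum>i<length qs. of_nat (snd (qs ! i)) * mz_increment (lower_exponent i qs) n z)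
      = (\<Sum>i<length qs. of_nat (snd (qs ! i)) * mz_series (lower_exponent i qs) z)"
    by (rule sums_unique[symmetric])
  have "\<forall>\<^sub>F x in nhds z. (\<Sum>n. mz_increment qs n x) = mz_series qs x"
    using eventually_nhds_in_open[OF S(1) c(2)]
  proof eventually_elim
    case (elim x)
    then have "Re x < 0" using c(1) by (simp add: S_def)
    from mz_increment_sums[OF this assms(2) False] show ?case
      by (simp add: sums_iff)
  qed
  from DERIV_cong_ev[OF refl this refl] D show ?thesis
    by (simp only: series_value)
qed

section \<open>Germs at 0 on the left half-plane\<close>

abbreviation at_0_lhp :: "complex filter" where
  "at_0_lhp \<equiv> at 0 within {z. Re z < 0}"

lemma eventually_at_0_lhp:
  "(\<forall>\<^sub>F z in at_0_lhp. P z) \<longleftrightarrow> (\<exists>d>0. \<forall>z. Re z < 0 \<and> norm z < d \<longrightarrow> P z)"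
  unfolding eventually_at by (force simp: dist_norm)

lemma eventually_Re_neg_at_0_lhp: "\<forall>\<^sub>F z in at_0_lhp. Re z < 0"
  by (auto simp: eventually_at_0_lhp intro: exI[of _ 1])

lemma eventually_at_0_lhp_imp_at_0:
  "\<forall>\<^sub>F z in at 0. P z \<Longrightarrow> \<forall>\<^sub>F z in at_0_lhp. P z"
  by (rule filter_leD[OF at_within_le_at])

lemma open_lhp_ball: "open ({z. Re z < 0} \<inter> ball 0 d)"
  by (intro open_Int open_halfspace_Re_lt open_ball)

lemma convex_lhp_ball: "convex ({z. Re z < 0} \<inter> ball 0 d)"
  by (intro convex_Int convex_halfspace_Re_lt convex_ball)

lemma eventually_nhds_at_0_lhp:
  assumes "\<forall>\<^sub>F z in at_0_lhp. P z"
  shows "\<forall>\<^sub>F z in at_0_lhp. \<forall>\<^sub>F w in nhds z. P w"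
proof -
  obtain d where d: "d > 0" "\<And>z. z \<in> {z. Re z < 0} \<inter> ball 0 d \<Longrightarrow> P z"
    using assms by (auto simp: eventually_at_0_lhp)
  have "\<forall>\<^sub>F w in nhds z. P w" if "z \<in> {z. Re z < 0} \<inter> ball 0 d" for z
    using eventually_nhds_in_open[OF open_lhp_ball that] by (rule eventually_mono) (rule d(2))
  then show ?thesis using d(1) by (auto simp: eventually_at_0_lhp)
qed

lemma constant_at_0_lhp_if_deriv_zero:
  assumes "\<forall>\<^sub>F z in at_0_lhp. (h has_field_derivative 0) (at z)"
  obtains c where "\<forall>\<^sub>F z in at_0_lhp. h z = c"
proof -
  obtain d where d: "d > 0" "\<And>z. z \<in> {z. Re z < 0} \<inter> ball 0 d \<Longrightarrow> (h has_field_derivative 0) (at z)"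
    using assms by (auto simp: eventually_at_0_lhp)
  obtain c where "\<forall>z\<in>{z. Re z < 0} \<inter> ball 0 d. h z = c"
    using has_field_derivative_zero_constant[OF convex_lhp_ball] d(2) has_field_derivative_at_within
    by blast
  with d(1) have "\<forall>\<^sub>F z in at_0_lhp. h z = c" by (auto simp: eventually_at_0_lhp)
  then show ?thesis by (rule that)
qed

text \<open>Membership in \<open>C{{\<epsilon>,\<epsilon>^-1}}\<close>: near 0 and on \<open>Re \<epsilon> < 0\<close>, the function agrees with
  one that is meromorphic at 0.\<close>

definition laurent_germ :: "(complex \<Rightarrow> complex) \<Rightarrow> bool" where
  "laurent_germ f \<longleftrightarrow> (\<exists>g F. g has_laurent_expansion F \<and> (\<forall>\<^sub>F z in at_0_lhp. f z = g z))"

lemma laurent_germ_iff_eval_fls: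
  "laurent_germ f \<longleftrightarrow> (\<exists>F. 0 < fls_conv_radius F \<and> (\<forall>\<^sub>F z in at_0_lhp. f z = eval_fls F z))"
proof
  assume "laurent_germ f"
  then obtain g F where g: "g has_laurent_expansion F" "\<forall>\<^sub>F z in at_0_lhp. f z = g z"
    by (auto simp: laurent_germ_def)
  have "\<forall>\<^sub>F z in at_0_lhp. eval_fls F z = g z"
    using g(1) by (intro eventually_at_0_lhp_imp_at_0) (simp add: has_laurent_expansion_def)
  with g(2) have "\<forall>\<^sub>F z in at_0_lhp. f z = eval_fls F z" by eventually_elim simp
  with g(1) show "\<exists>F. 0 < fls_conv_radius F \<and> (\<forall>\<^sub>F z in at_0_lhp. f z = eval_fls F z)"
    by (auto simp: has_laurent_expansion_def)
qed (auto simp: laurent_germ_def intro: eval_fls_has_laurent_expansion)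

lemma laurent_germ_cong:
  assumes "laurent_germ f" "\<forall>\<^sub>F z in at_0_lhp. f z = g z"
  shows "laurent_germ g"
proof -
  obtain h F where "h has_laurent_expansion F" "\<forall>\<^sub>F z in at_0_lhp. f z = h z"
    using assms(1) by (auto simp: laurent_germ_def)
  moreover from this(2) assms(2) have "\<forall>\<^sub>F z in at_0_lhp. g z = h z"
    by eventually_elim simp
  ultimately show ?thesis by (auto simp: laurent_germ_def)
qed

lemma has_laurent_expansion_imp_laurent_germ:
  "f has_laurent_expansion F \<Longrightarrow> laurent_germ f"
  by (auto simp: laurent_germ_def)

lemma laurent_germ_eval_fls: "0 < fls_conv_radius F \<Longrightarrow> laurent_germ (eval_fls F)"
  by (rule has_laurent_expansion_imp_laurent_germ[OF eval_fls_has_laurent_expansion])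

lemma laurent_germ_const: "laurent_germ (\<lambda>_. c)"
  by (rule has_laurent_expansion_imp_laurent_germ[OF has_laurent_expansion_const])

lemma laurent_germ_add:
  assumes "laurent_germ f" "laurent_germ g"
  shows "laurent_germ (\<lambda>z. f z + g z)"
proof -
  obtain f' F g' G where "f' has_laurent_expansion F" "g' has_laurent_expansion G"
    and "\<forall>\<^sub>F z in at_0_lhp. f z = f' z" "\<forall>\<^sub>F z in at_0_lhp. g z = g' z"
    using assms by (auto simp: laurent_germ_def)
  moreover from this(3,4) have "\<forall>\<^sub>F z in at_0_lhp. f z + g z = f' z + g' z"
    by eventually_elim simp
  ultimately show ?thesis
    unfolding laurent_germ_def by (blast intro: laurent_expansion_intros)
qed

lemma laurent_germ_mult:
  assumes "laurent_germ f" "laurent_germ g"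
  shows "laurent_germ (\<lambda>z. f z * g z)"
proof -
  obtain f' F g' G where "f' has_laurent_expansion F" "g' has_laurent_expansion G"
    and "\<forall>\<^sub>F z in at_0_lhp. f z = f' z" "\<forall>\<^sub>F z in at_0_lhp. g z = g' z"
    using assms by (auto simp: laurent_germ_def)
  moreover from this(3,4) have "\<forall>\<^sub>F z in at_0_lhp. f z * g z = f' z * g' z"
    by eventually_elim simp
  ultimately show ?thesis
    unfolding laurent_germ_def by (blast intro: laurent_expansion_intros)
qed

lemma laurent_germ_sum_list:
  "(\<And>x. x \<in> set xs \<Longrightarrow> laurent_germ (f x)) \<Longrightarrow> laurent_germ (\<lambda>z. \<Sum>x\<leftarrow>xs. f x z)"
  by (induction xs) (auto intro: laurent_germ_const laurent_germ_add)

lemma laurent_germ_deriv: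
  assumes "laurent_germ f" "\<forall>\<^sub>F z in at_0_lhp. (f has_field_derivative f' z) (at z)"
  shows "laurent_germ f'"
proof -
  obtain g F where g: "g has_laurent_expansion F" and fg: "\<forall>\<^sub>F z in at_0_lhp. f z = g z"
    using assms(1) by (auto simp: laurent_germ_def)
  from eventually_nhds_at_0_lhp[OF fg] assms(2)
  have "\<forall>\<^sub>F z in at_0_lhp. f' z = deriv g z"
  proof eventually_elim
    case (elim z)
    then have "(g has_field_derivative f' z) (at z)"
      using DERIV_cong_ev[OF refl _ refl] by blast
    then show ?case by (rule DERIV_imp_deriv[symmetric])
  qed
  with has_laurent_expansion_deriv[OF g] show ?thesis
    by (auto simp: laurent_germ_def)
qed

definition log_laurent_germ :: "(complex \<Rightarrow> complex) \<Rightarrow> bool" where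
  "log_laurent_germ f \<longleftrightarrow> (\<exists>M c. (\<forall>j\<le>M. laurent_germ (c j)) \<and>
      (\<forall>\<^sub>F z in at_0_lhp. f z = (\<Sum>j\<le>M. c j z * Ln (- z) ^ j)))"

lemma log_laurent_germ_extend:
  assumes "log_laurent_germ f"
  shows "\<exists>M0. \<forall>M\<ge>M0. \<exists>c. (\<forall>j\<le>M. laurent_germ (c j)) \<and>
      (\<forall>\<^sub>F z in at_0_lhp. f z = (\<Sum>j\<le>M. c j z * Ln (- z) ^ j))"
proof -
  obtain M0 c where c: "\<forall>j\<le>M0. laurent_germ (c j)"
    "\<forall>\<^sub>F z in at_0_lhp. f z = (\<Sum>j\<le>M0. c j z * Ln (- z) ^ j)"
    using assms by (auto simp: log_laurent_germ_def)
  have "\<exists>c'. (\<forall>j\<le>M. laurent_germ (c' j)) \<and>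
      (\<forall>\<^sub>F z in at_0_lhp. f z = (\<Sum>j\<le>M. c' j z * Ln (- z) ^ j))" if "M0 \<le> M" for M
  proof (intro exI conjI)
    let ?c = "\<lambda>j. if j \<le> M0 then c j else (\<lambda>_. 0)"
    show "\<forall>j\<le>M. laurent_germ (?c j)" using c(1) by (auto intro: laurent_germ_const)
    have "(\<Sum>j\<le>M. ?c j z * Ln (- z) ^ j) = (\<Sum>j\<le>M0. c j z * Ln (- z) ^ j)" for z
      using that by (intro sum.mono_neutral_cong_right) auto
    then show "\<forall>\<^sub>F z in at_0_lhp. f z = (\<Sum>j\<le>M. ?c j z * Ln (- z) ^ j)"
      using c(2) by simp
  qed
  then show ?thesis by blast
qed

lemma log_laurent_germ_cong:
  assumes "log_laurent_germ f" "\<forall>\<^sub>F z in at_0_lhp. f z = g z"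
  shows "log_laurent_germ g"
proof -
  obtain M c where "\<forall>j\<le>M. laurent_germ (c j)"
    "\<forall>\<^sub>F z in at_0_lhp. f z = (\<Sum>j\<le>M. c j z * Ln (- z) ^ j)"
    using assms(1) by (auto simp: log_laurent_germ_def)
  moreover from this(2) assms(2)
  have "\<forall>\<^sub>F z in at_0_lhp. g z = (\<Sum>j\<le>M. c j z * Ln (- z) ^ j)"
    by eventually_elim simp
  ultimately show ?thesis by (auto simp: log_laurent_germ_def)
qed

lemma laurent_germ_imp_log_laurent_germ: "laurent_germ f \<Longrightarrow> log_laurent_germ f"
  unfolding log_laurent_germ_def
  by (intro exI[of _ 0] exI[of _ "\<lambda>_. f"]) simp

lemma log_laurent_germ_Ln_power: "log_laurent_germ (\<lambda>z. Ln (- z) ^ j)"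
proof -
  have "(\<Sum>i\<le>j. (if i = j then 1 else 0) * Ln (- z) ^ i) = Ln (- z) ^ j" for z :: complex
    by (subst sum.cong[OF refl, of _ _ "\<lambda>i. if i = j then Ln (- z) ^ j else 0"]) auto
  then show ?thesis
    unfolding log_laurent_germ_def
    by (intro exI[of _ j] exI[of _ "\<lambda>i _. if i = j then 1 else 0"]) (simp add: laurent_germ_const)
qed

lemma log_laurent_germ_add:
  assumes "log_laurent_germ f" "log_laurent_germ g"
  shows "log_laurent_germ (\<lambda>z. f z + g z)"
proof -
  obtain M1 M2 where
    "\<forall>M\<ge>M1. \<exists>c. (\<forall>j\<le>M. laurent_germ (c j)) \<and>
        (\<forall>\<^sub>F z in at_0_lhp. f z = (\<Sum>j\<le>M. c j z * Ln (- z) ^ j))"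
    "\<forall>M\<ge>M2. \<exists>c. (\<forall>j\<le>M. laurent_germ (c j)) \<and>
        (\<forall>\<^sub>F z in at_0_lhp. g z = (\<Sum>j\<le>M. c j z * Ln (- z) ^ j))"
    using log_laurent_germ_extend[OF assms(1)] log_laurent_germ_extend[OF assms(2)] by blast
  then obtain c1 c2 where c1: "\<forall>j\<le>max M1 M2. laurent_germ (c1 j)"
      "\<forall>\<^sub>F z in at_0_lhp. f z = (\<Sum>j\<le>max M1 M2. c1 j z * Ln (- z) ^ j)"
    and c2: "\<forall>j\<le>max M1 M2. laurent_germ (c2 j)"
      "\<forall>\<^sub>F z in at_0_lhp. g z = (\<Sum>j\<le>max M1 M2. c2 j z * Ln (- z) ^ j)"
    by (meson max.cobounded1 max.cobounded2)
  show ?thesis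
    unfolding log_laurent_germ_def
  proof (intro exI conjI)
    show "\<forall>j\<le>max M1 M2. laurent_germ (\<lambda>z. c1 j z + c2 j z)"
      using c1(1) c2(1) by (auto intro: laurent_germ_add)
    show "\<forall>\<^sub>F z in at_0_lhp. f z + g z = (\<Sum>j\<le>max M1 M2. (c1 j z + c2 j z) * Ln (- z) ^ j)"
      using c1(2) c2(2) by eventually_elim (simp add: distrib_right sum.distrib)
  qed
qed

lemma log_laurent_germ_mult:
  assumes "laurent_germ a" "log_laurent_germ f"
  shows "log_laurent_germ (\<lambda>z. a z * f z)"
proof -
  obtain M c where c: "\<forall>j\<le>M. laurent_germ (c j)"
    "\<forall>\<^sub>F z in at_0_lhp. f z = (\<Sum>j\<le>M. c j z * Ln (- z) ^ j)"
    using assms(2) by (auto simp: log_laurent_germ_def)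
  show ?thesis
    unfolding log_laurent_germ_def
  proof (intro exI conjI)
    show "\<forall>j\<le>M. laurent_germ (\<lambda>z. a z * c j z)"
      using c(1) assms(1) by (auto intro: laurent_germ_mult)
    show "\<forall>\<^sub>F z in at_0_lhp. a z * f z = (\<Sum>j\<le>M. (a z * c j z) * Ln (- z) ^ j)"
      using c(2) by eventually_elim (simp add: sum_distrib_left mult.assoc)
  qed
qed

lemma log_laurent_germ_const: "log_laurent_germ (\<lambda>_. c)"
  by (rule laurent_germ_imp_log_laurent_germ[OF laurent_germ_const])

lemma log_laurent_germ_sum:
  "(\<And>x. x \<in> A \<Longrightarrow> log_laurent_germ (f x)) \<Longrightarrow> log_laurent_germ (\<lambda>z. \<Sum>x\<in>A. f x z)"
  by (induction A rule: infinite_finite_induct) (auto intro: log_laurent_germ_const log_laurent_germ_add)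

lemma log_laurent_germ_sum_list:
  "(\<And>x. x \<in> set xs \<Longrightarrow> log_laurent_germ (f x)) \<Longrightarrow> log_laurent_germ (\<lambda>z. \<Sum>x\<leftarrow>xs. f x z)"
  by (induction xs) (auto intro: log_laurent_germ_const log_laurent_germ_add)

lemma log_laurent_germ_cmult: "log_laurent_germ f \<Longrightarrow> log_laurent_germ (\<lambda>z. c * f z)"
  by (rule log_laurent_germ_mult[OF laurent_germ_const])

lemma fls_conv_radius_integral:
  "fls_conv_radius F \<le> fls_conv_radius (fls_integral F)"
proof -
  define a where "a n = fls_nth F (int n)" for n
  define b where "b n = fls_nth (fls_integral F) (int n)" for n
  have "conv_radius a \<le> conv_radius b"
  proof (rule conv_radius_geI_ex')
    fix r :: real assume r: "0 < r" "ereal r < conv_radius a"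
    have summable_a: "summable (\<lambda>n. norm (a n * of_real r ^ n))"
      by (rule abs_summable_in_conv_radius) (use r in simp)
    have "summable (\<lambda>m. norm (b (Suc m) * of_real r ^ Suc m))"
    proof (rule summable_comparison_test'[where N=0])
      show "summable (\<lambda>m. r * norm (a m * of_real r ^ m))" by (intro summable_mult summable_a)
      fix m :: nat
      have "b (Suc m) = inverse (of_nat (Suc m)) * a m"
        by (simp add: b_def a_def)
      then have "norm (norm (b (Suc m) * of_real r ^ Suc m)) = inverse (real (Suc m)) * (r * norm (a m * of_real r ^ m))"
        using r by (simp add: norm_mult norm_power norm_inverse mult_ac norm_of_nat del: of_nat_Suc)
      also have "\<dots> \<le> 1 * (r * norm (a m * of_real r ^ m))"
      proof (intro mult_right_mono)
        show "inverse (real (Suc m)) \<le> 1" by (simp add: inverse_le_1_iff del: of_nat_Suc)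
      qed (use r in auto)
      finally show "norm (norm (b (Suc m) * of_real r ^ Suc m)) \<le> r * norm (a m * of_real r ^ m)" by simp
    qed
    then have "summable (\<lambda>m. b (Suc m) * of_real r ^ Suc m)" by (rule summable_norm_cancel)
    then show "summable (\<lambda>n. b n * of_real r ^ n)" by (rule summable_Suc_iff[THEN iffD1])
  qed
  then show ?thesis by (simp add: fls_conv_radius_def fps_conv_radius_def a_def b_def)
qed

lemma fls_primitive_up_to_residue:
  assumes "0 < fls_conv_radius F"
  obtains H where "0 < fls_conv_radius H"
    "\<forall>\<^sub>F z in at 0. (eval_fls H has_field_derivative eval_fls F z - fls_residue F / z) (at z)"
proof -
  define X where "X = fls_shift 1 (fls_const (fls_residue F))"
  define H where "H = fls_integral (F - X)"
  have "fls_regpart X = 0" by (intro fps_ext) (simp add: X_def)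
  then have R_X: "fls_conv_radius X = \<infinity>" by (simp add: fls_conv_radius_def)
  then have "fls_conv_radius F \<le> fls_conv_radius (F - X)"
    using fls_conv_radius_diff[of F X] by simp
  then have R_H: "fls_conv_radius F \<le> fls_conv_radius H"
    unfolding H_def using fls_conv_radius_integral order_trans by blast
  have H': "fls_deriv H = F - X"
    unfolding H_def by (rule fls_deriv_fls_integral) (simp add: X_def)
  have "\<forall>\<^sub>F z in at 0. z \<in> eball 0 (fls_conv_radius F) - {0}"
    using assms by (intro eventually_at_in_open) (auto simp: zero_ereal_def)
  then have "\<forall>\<^sub>F z in at 0. (eval_fls H has_field_derivative eval_fls F z - fls_residue F / z) (at z)"
  proof eventually_elim
    case (elim z)
    then have "z \<in> eball 0 (fls_conv_radius H) - {0}"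
      using R_H by (auto intro: less_le_trans)
    from has_field_derivative_eval_fls[OF this]
    have "(eval_fls H has_field_derivative eval_fls (F - X) z) (at z)"
      by (simp add: H')
    also have "eval_fls (F - X) z = eval_fls F z - fls_residue F / z"
      using elim R_X by (simp add: eval_fls_diff X_def eval_fls_shift power_int_minus divide_inverse)
    finally show ?case .
  qed
  with assms R_H show ?thesis
    using that less_le_trans by blast
qed

lemma has_field_derivative_Ln_minus:
  assumes "Re z < 0"
  shows "((\<lambda>z. Ln (- z)) has_field_derivative 1 / z) (at z)"
proof -
  have "- z \<notin> \<real>\<^sub>\<le>\<^sub>0" using assms by (simp add: complex_nonpos_Reals_iff)
  from DERIV_chain2[OF has_field_derivative_Ln[OF this] DERIV_minus[OF DERIV_ident]]
  show ?thesis by (simp add: divide_inverse)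
qed

lemma has_field_derivative_Ln_minus_power:
  assumes "Re z < 0"
  shows "((\<lambda>z. Ln (- z) ^ Suc n) has_field_derivative of_nat (Suc n) * Ln (- z) ^ n / z) (at z)"
  using DERIV_power[OF has_field_derivative_Ln_minus[OF assms], of "Suc n"] by simp

lemma has_field_derivative_add_residue_Ln:
  assumes "Re z < 0" "(h has_field_derivative f - c / z) (at z)"
  shows "((\<lambda>z. h z + c * Ln (- z)) has_field_derivative f) (at z)"
  using DERIV_add[OF assms(2) DERIV_cmult[OF has_field_derivative_Ln_minus[OF assms(1)], of c]] by simp

text \<open>Integration by parts, except for the residue term \<open>c/z \<cdot> ln(-z)^(j+1)\<close>, whose primitive
  is \<open>c/(j+2) \<cdot> ln(-z)^(j+2)\<close>.\<close>
lemma has_field_derivative_by_parts_Ln_power: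
  assumes "Re z < 0" "(h has_field_derivative f - c / z) (at z)"
    "(Q has_field_derivative h z / z * Ln (- z) ^ j) (at z)"
  shows "((\<lambda>z. h z * Ln (- z) ^ Suc j + (- of_nat (Suc j)) * Q z
      + (c / of_nat (Suc (Suc j))) * Ln (- z) ^ Suc (Suc j)) has_field_derivative f * Ln (- z) ^ Suc j) (at z)"
proof -
  have "((\<lambda>z. h z * Ln (- z) ^ Suc j + (- of_nat (Suc j)) * Q z
      + (c / of_nat (Suc (Suc j))) * Ln (- z) ^ Suc (Suc j)) has_field_derivative
        ((f - c / z) * Ln (- z) ^ Suc j + of_nat (Suc j) * Ln (- z) ^ j / z * h z)
        + (- of_nat (Suc j)) * (h z / z * Ln (- z) ^ j)
        + (c / of_nat (Suc (Suc j))) * (of_nat (Suc (Suc j)) * Ln (- z) ^ Suc j / z)) (at z)"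
    using assms by (intro DERIV_add DERIV_cmult DERIV_mult has_field_derivative_Ln_minus_power)
  also have "c / of_nat (Suc (Suc j)) * (of_nat (Suc (Suc j)) * Ln (- z) ^ Suc j / z)
      = c * Ln (- z) ^ Suc j / z"
    by (simp del: of_nat_Suc)
  finally show ?thesis
    by (simp add: algebra_simps add_divide_distrib[symmetric])
qed

lemma log_laurent_germ_primitive_fls:
  assumes "0 < fls_conv_radius F"
  shows "\<exists>P. log_laurent_germ P \<and>
           (\<forall>\<^sub>F z in at_0_lhp. (P has_field_derivative eval_fls F z * Ln (- z) ^ j) (at z))"
  using assms
proof (induction j arbitrary: F)
  case 0
  obtain H where H: "0 < fls_conv_radius H"
    "\<forall>\<^sub>F z in at 0. (eval_fls H has_field_derivative eval_fls F z - fls_residue F / z) (at z)"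
    using fls_primitive_up_to_residue[OF 0] by blast
  have "log_laurent_germ (\<lambda>z. eval_fls H z + fls_residue F * Ln (- z) ^ 1)"
    by (intro log_laurent_germ_add log_laurent_germ_cmult log_laurent_germ_Ln_power
        laurent_germ_imp_log_laurent_germ laurent_germ_eval_fls H(1))
  moreover from eventually_at_0_lhp_imp_at_0[OF H(2)] eventually_Re_neg_at_0_lhp
  have "\<forall>\<^sub>F z in at_0_lhp. ((\<lambda>z. eval_fls H z + fls_residue F * Ln (- z) ^ 1) has_field_derivative
      eval_fls F z * Ln (- z) ^ 0) (at z)"
    by eventually_elim (simp add: has_field_derivative_add_residue_Ln)
  ultimately show ?case by blast
next
  case (Suc j)
  obtain H where H: "0 < fls_conv_radius H"
    "\<forall>\<^sub>F z in at 0. (eval_fls H has_field_derivative eval_fls F z - fls_residue F / z) (at z)"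
    using fls_primitive_up_to_residue[OF Suc.prems] by blast
  obtain Q where Q: "log_laurent_germ Q"
    "\<forall>\<^sub>F z in at_0_lhp. (Q has_field_derivative eval_fls (fls_shift 1 H) z * Ln (- z) ^ j) (at z)"
    using Suc.IH[of "fls_shift 1 H"] H(1) by auto
  define P where "P z = eval_fls H z * Ln (- z) ^ Suc j + (- of_nat (Suc j)) * Q z
      + (fls_residue F / of_nat (Suc (Suc j))) * Ln (- z) ^ Suc (Suc j)" for z
  have "log_laurent_germ P"
    unfolding P_def[abs_def]
    by (intro log_laurent_germ_add log_laurent_germ_cmult log_laurent_germ_mult
        log_laurent_germ_Ln_power laurent_germ_eval_fls H(1) Q(1))
  moreover from eventually_at_0_lhp_imp_at_0[OF H(2)] Q(2) eventually_Re_neg_at_0_lhp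
  have "\<forall>\<^sub>F z in at_0_lhp. (P has_field_derivative eval_fls F z * Ln (- z) ^ Suc j) (at z)"
  proof eventually_elim
    case (elim z)
    then have "z \<noteq> 0" by auto
    then have "eval_fls (fls_shift 1 H) z = eval_fls H z / z"
      by (simp add: eval_fls_shift power_int_minus divide_inverse)
    with elim show ?case
      unfolding P_def[abs_def] by (intro has_field_derivative_by_parts_Ln_power) simp_all
  qed
  ultimately show ?case by blast
qed

lemma log_laurent_germ_primitive:
  assumes "laurent_germ a"
  shows "\<exists>P. log_laurent_germ P \<and>
           (\<forall>\<^sub>F z in at_0_lhp. (P has_field_derivative a z * Ln (- z) ^ j) (at z))"
proof -
  obtain F where F: "0 < fls_conv_radius F" "\<forall>\<^sub>F z in at_0_lhp. a z = eval_fls F z"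
    using assms by (auto simp: laurent_germ_iff_eval_fls)
  obtain P where P: "log_laurent_germ P"
    "\<forall>\<^sub>F z in at_0_lhp. (P has_field_derivative eval_fls F z * Ln (- z) ^ j) (at z)"
    using log_laurent_germ_primitive_fls[OF F(1)] by blast
  from P(2) F(2) have "\<forall>\<^sub>F z in at_0_lhp. (P has_field_derivative a z * Ln (- z) ^ j) (at z)"
    by eventually_elim simp
  with P(1) show ?thesis by blast
qed

lemma log_laurent_germ_antiderivative:
  assumes "log_laurent_germ f'" "\<forall>\<^sub>F z in at_0_lhp. (f has_field_derivative f' z) (at z)"
  shows "log_laurent_germ f"
proof -
  obtain M c where c: "\<forall>j\<le>M. laurent_germ (c j)"
    "\<forall>\<^sub>F z in at_0_lhp. f' z = (\<Sum>j\<le>M. c j z * Ln (- z) ^ j)"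
    using assms(1) by (auto simp: log_laurent_germ_def)
  have "\<forall>j\<in>{..M}. \<exists>P. log_laurent_germ P \<and>
      (\<forall>\<^sub>F z in at_0_lhp. (P has_field_derivative c j z * Ln (- z) ^ j) (at z))"
    using c(1) by (auto intro: log_laurent_germ_primitive)
  from bchoice[OF this] obtain P where P: "\<forall>j\<in>{..M}. log_laurent_germ (P j) \<and>
      (\<forall>\<^sub>F z in at_0_lhp. (P j has_field_derivative c j z * Ln (- z) ^ j) (at z))"
    by blast
  define PP where "PP z = (\<Sum>j\<le>M. P j z)" for z
  have "\<forall>\<^sub>F z in at_0_lhp. \<forall>j\<in>{..M}. (P j has_field_derivative c j z * Ln (- z) ^ j) (at z)"
    using P by (simp add: eventually_ball_finite_distrib)
  with c(2) assms(2) have "\<forall>\<^sub>F z in at_0_lhp. ((\<lambda>z. f z - PP z) has_field_derivative 0) (at z)"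
  proof eventually_elim
    case (elim z)
    have "(PP has_field_derivative (\<Sum>j\<le>M. c j z * Ln (- z) ^ j)) (at z)"
      unfolding PP_def[abs_def] by (rule DERIV_sum) (use elim(3) in blast)
    from DERIV_diff[OF elim(2) this] show ?case
      by (simp only: elim(1) diff_self)
  qed
  then obtain C where C: "\<forall>\<^sub>F z in at_0_lhp. f z - PP z = C"
    by (rule constant_at_0_lhp_if_deriv_zero)
  have "log_laurent_germ (\<lambda>z. PP z + C)"
    unfolding PP_def using P by (intro log_laurent_germ_add log_laurent_germ_sum log_laurent_germ_const) blast
  moreover from C have "\<forall>\<^sub>F z in at_0_lhp. PP z + C = f z"
    by eventually_elim (simp add: diff_eq_eq add.commute)
  ultimately show ?thesis
    by (rule log_laurent_germ_cong)
qed

lemma conv_laurent_eval_fls: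
  assumes "0 < fls_conv_radius F"
  shows "conv_laurent (eval_fls F)"
proof -
  obtain R where R: "0 < ereal R" "ereal R < fls_conv_radius F" using ereal_dense2[OF assms] by blast
  define n where "n = fls_subdegree F"
  define N where "N = nat (- n)"
  define c where "c m = fls_nth F (int m - int N)" for m
  have "(\<lambda>m. c m * z powi (int m - int N)) sums eval_fls F z" if z: "0 < norm z" "norm z < R" for z
  proof -
    have zr: "norm z < fls_conv_radius F" using z R by (meson ereal_less_le less_ereal.simps(1) order.strict_trans)
    have expansion: "(\<lambda>k. fls_nth F (int k + n) * z powi (int k + n)) sums eval_fls F z"
      unfolding n_def by (rule sums_eval_fls) (use zr z in auto)
    show ?thesis
    proof (cases "n \<le> 0")
      case True
      have shift: "\<And>m. int m - int N = int m + n" using True by (simp add: N_def)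
      have "(\<lambda>m. c m * z powi (int m - int N)) = (\<lambda>k. fls_nth F (int k + n) * z powi (int k + n))"
        unfolding c_def by (rule ext) (simp only: shift)
      then show ?thesis using expansion by simp
    next
      case False
      then have N0: "N = 0" by (simp add: N_def)
      define g where "g m = c m * z powi (int m - int N)" for m
      have "g i = 0" if "i < nat n" for i
        using that False by (simp add: g_def c_def N0 n_def)
      then have "(\<lambda>i. g (i + nat n)) sums eval_fls F z \<longleftrightarrow> g sums eval_fls F z"
        by (rule sums_zero_iff_shift)
      moreover have "(\<lambda>i. g (i + nat n)) = (\<lambda>k. fls_nth F (int k + n) * z powi (int k + n))"
        using False by (simp add: g_def c_def N0 fun_eq_iff)
      ultimately have "g sums eval_fls F z" using expansion by simp
      then show ?thesis unfolding g_def[abs_def] .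
    qed
  qed
  then show ?thesis unfolding conv_laurent_def using R(1) by (intro exI[of _ R] exI[of _ N] exI[of _ c]) auto
qed

lemma in_laurent_if_laurent_germ:
  assumes "laurent_germ f"
  shows "in_laurent f"
proof -
  obtain F where F: "0 < fls_conv_radius F" "\<forall>\<^sub>F z in at_0_lhp. f z = eval_fls F z"
    using assms by (auto simp: laurent_germ_iff_eval_fls)
  then show ?thesis
    unfolding in_laurent_def using conv_laurent_eval_fls[OF F(1)] F(2)
    by (auto simp: eventually_at_0_lhp)
qed

lemma in_laurent_log_if_log_laurent_germ:
  assumes "log_laurent_germ f"
  shows "in_laurent_log f"
proof -
  obtain M c where c: "\<forall>j\<le>M. laurent_germ (c j)"
    "\<forall>\<^sub>F z in at_0_lhp. f z = (\<Sum>j\<le>M. c j z * Ln (- z) ^ j)"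
    using assms by (auto simp: log_laurent_germ_def)
  then have "\<forall>j\<in>{..M}. \<exists>F. 0 < fls_conv_radius F \<and> (\<forall>\<^sub>F z in at_0_lhp. c j z = eval_fls F z)"
    by (simp add: laurent_germ_iff_eval_fls)
  from bchoice[OF this] obtain F where F: "\<forall>j\<in>{..M}. 0 < fls_conv_radius (F j) \<and>
      (\<forall>\<^sub>F z in at_0_lhp. c j z = eval_fls (F j) z)"
    by blast
  then have "\<forall>\<^sub>F z in at_0_lhp. \<forall>j\<in>{..M}. c j z = eval_fls (F j) z"
    by (simp add: eventually_ball_finite_distrib)
  with c(2) have "\<forall>\<^sub>F z in at_0_lhp. f z = (\<Sum>j\<le>M. eval_fls (F j) z * Ln (- z) ^ j)"
    by eventually_elim simp
  moreover have "\<forall>j\<le>M. conv_laurent (eval_fls (F j))"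
    using F by (simp add: conv_laurent_eval_fls)
  ultimately show ?thesis
    unfolding in_laurent_log_def eventually_at_0_lhp
    by (intro exI[of _ M] exI[of _ "\<lambda>j. eval_fls (F j)"]) blast
qed

section \<open>Summing out a nonpositive exponent\<close>

definition exp_moment :: "nat \<Rightarrow> nat \<Rightarrow> complex \<Rightarrow> complex" where
  "exp_moment r e = mz_series [(- int e, r)]"

lemma mz_factor_neg_exponent: "mz_factor (- int p, r) z n = exp (z * of_nat (n * r)) * of_nat n ^ p"
  by (simp add: mz_factor_def power_int_of_nat)

lemma mz_factor_mult:
  assumes "1 \<le> n"
  shows "mz_factor (a, r1) z n * mz_factor (b, r2) z n = mz_factor (a + b, r1 + r2) z n"
proof -
  have "(of_nat n :: complex) powi (- (a + b)) = of_nat n powi (- a) * of_nat n powi (- b)"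
    using assms by (simp add: power_int_add[symmetric])
  moreover have "exp (z * of_nat (n * (r1 + r2))) = exp (z * of_nat (n * r1)) * exp (z * of_nat (n * r2))"
    by (simp add: exp_add[symmetric] algebra_simps)
  ultimately show ?thesis by (simp add: mz_factor_def mult_ac)
qed

lemma exp_moment_sums:
  assumes "Re z < 0" "0 < r"
  shows "(\<lambda>n. mz_factor (- int e, r) z (Suc n)) sums exp_moment r e z"
  using mz_increment_sums[of z "[(- int e, r)]"] assms by (simp add: exp_moment_def mz_increment_def)

lemma exp_moment_0_eq:
  assumes "Re z < 0" "0 < r"
  shows "exp_moment r 0 z = exp (of_nat r * z) / (1 - exp (of_nat r * z))"
proof -
  have "norm (exp (of_nat r * z)) < 1" using assms by (simp add: mult_pos_neg)
  from sums_mult[OF geometric_sums[OF this], of "exp (of_nat r * z)"]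
  have "(\<lambda>n. exp (of_nat r * z) ^ Suc n) sums (exp (of_nat r * z) / (1 - exp (of_nat r * z)))"
    by (simp add: divide_inverse)
  moreover have "exp (of_nat r * z) ^ Suc n = mz_factor (- int 0, r) z (Suc n)" for n
  proof -
    have "exp (of_nat r * z) ^ Suc n = exp (of_nat (Suc n) * (of_nat r * z))"
      by (rule exp_of_nat_mult[symmetric])
    then show ?thesis by (simp only: mz_factor_def of_nat_mult) (simp add: mult_ac)
  qed
  ultimately show ?thesis using exp_moment_sums[OF assms, of 0] sums_unique2 by simp
qed

lemma has_field_derivative_exp_moment:
  assumes "Re z < 0" "0 < r"
  shows "(exp_moment r e has_field_derivative of_nat r * exp_moment r (Suc e) z) (at z)"
proof -
  from has_field_derivative_mz_series[of z "[(- int e, r)]"] assms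
  have "(mz_series [(- int e, r)] has_field_derivative of_nat r * mz_series [(- int e - 1, r)] z) (at z)"
    by simp
  moreover have "- int e - 1 = - int (Suc e)" by simp
  ultimately show ?thesis by (simp only: exp_moment_def)
qed

lemma laurent_germ_exp_moment:
  assumes "0 < r"
  shows "laurent_germ (exp_moment r e)"
proof (induction e)
  case 0
  have "(\<lambda>z. exp (of_nat r * z) / (1 - exp (of_nat r * z))) has_laurent_expansion
      fps_to_fls (fps_exp (of_nat r)) / (1 - fps_to_fls (fps_exp (of_nat r)))"
    by (intro laurent_expansion_intros has_laurent_expansion_fps has_fps_expansion_exp)
  moreover have "\<forall>\<^sub>F z in at_0_lhp. exp (of_nat r * z) / (1 - exp (of_nat r * z)) = exp_moment r 0 z"
    using eventually_Re_neg_at_0_lhp by eventually_elim (simp add: exp_moment_0_eq assms)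
  ultimately show ?case
    by (rule laurent_germ_cong[OF has_laurent_expansion_imp_laurent_germ])
next
  case (Suc e)
  have "\<forall>\<^sub>F z in at_0_lhp. (exp_moment r e has_field_derivative of_nat r * exp_moment r (Suc e) z) (at z)"
    using eventually_Re_neg_at_0_lhp by eventually_elim (rule has_field_derivative_exp_moment[OF _ assms])
  from laurent_germ_mult[OF laurent_germ_const laurent_germ_deriv[OF Suc this]]
  have "laurent_germ (\<lambda>z. inverse (of_nat r) * (of_nat r * exp_moment r (Suc e) z))" .
  moreover have "(\<lambda>z. inverse (of_nat r) * (of_nat r * exp_moment r (Suc e) z)) = exp_moment r (Suc e)"
    using assms by (simp add: fun_eq_iff)
  ultimately show ?case by simp
qed

text \<open>For \<open>b \<ge> 1\<close> this is the tail \<open>\<Sum>_(n\<ge>b) n^p e^(z r n)\<close>.\<close>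
definition exp_moment_tail :: "nat \<Rightarrow> nat \<Rightarrow> complex \<Rightarrow> nat \<Rightarrow> complex" where
  "exp_moment_tail p r z b = exp_moment r p z - mz_partial [(- int p, r)] z b"

lemma exp_moment_tail_tendsto_0:
  assumes "Re z < 0" "0 < r"
  shows "exp_moment_tail p r z \<longlonglongrightarrow> 0"
proof -
  have "(\<lambda>b. mz_partial [(- int p, r)] z b) \<longlonglongrightarrow> exp_moment r p z"
    using mz_partial_tendsto[of z "[(- int p, r)]"] assms by (simp add: exp_moment_def)
  from tendsto_diff[OF tendsto_const[of "exp_moment r p z"] this] show ?thesis
    by (simp add: exp_moment_tail_def[abs_def])
qed

lemma exp_moment_tail_sums:
  assumes "Re z < 0" "0 < r"
  shows "(\<lambda>t. mz_factor (- int p, r) z (Suc t + m)) sums exp_moment_tail p r z (Suc m)"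
proof -
  have "mz_partial [(- int p, r)] z (Suc m) = (\<Sum>i<m. mz_factor (- int p, r) z (Suc i))"
    using sum.shift_bounds_Suc_ivl[of "mz_factor (- int p, r) z" 0 m] by (simp add: atLeast0LessThan)
  then show ?thesis
    using exp_moment_sums[OF assms, of p] sums_iff_shift[of "\<lambda>n. mz_factor (- int p, r) z (Suc n)" m]
    by (simp add: exp_moment_tail_def algebra_simps)
qed

lemma exp_moment_tail_Suc:
  assumes "Re z < 0" "0 < r"
  shows "exp_moment_tail p r z (Suc m) = (\<Sum>e\<le>p. of_nat (p choose e) * exp_moment r e z
           * mz_factor (- int (p - e), r) z m)"
proof -
  have "mz_factor (- int p, r) z (Suc t + m)
      = (\<Sum>e\<le>p. of_nat (p choose e) * mz_factor (- int e, r) z (Suc t) * mz_factor (- int (p - e), r) z m)"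
    for t
  proof -
    have "mz_factor (- int p, r) z (Suc t + m)
        = exp (z * of_nat (Suc t * r)) * exp (z * of_nat (m * r)) * (of_nat (Suc t) + of_nat m) ^ p"
      unfolding mz_factor_neg_exponent by (simp add: exp_add[symmetric] algebra_simps)
    also have "\<dots> = (\<Sum>e\<le>p. of_nat (p choose e) * (exp (z * of_nat (Suc t * r)) * of_nat (Suc t) ^ e)
        * (exp (z * of_nat (m * r)) * of_nat m ^ (p - e)))"
      by (simp add: binomial_ring sum_distrib_left mult_ac)
    finally show ?thesis
      unfolding mz_factor_neg_exponent .
  qed
  moreover have "(\<lambda>t. \<Sum>e\<le>p. of_nat (p choose e) * mz_factor (- int e, r) z (Suc t) * mz_factor (- int (p - e), r) z m)
      sums (\<Sum>e\<le>p. of_nat (p choose e) * exp_moment r e z * mz_factor (- int (p - e), r) z m)"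
    by (intro sums_sum sums_mult sums_mult2 exp_moment_sums assms)
  ultimately show ?thesis
    using exp_moment_tail_sums[OF assms, of p m] sums_unique2 by simp
qed

type_synonym lin_comb = "((complex \<Rightarrow> complex) \<times> (int \<times> nat) list) list"

definition comb_partial :: "lin_comb \<Rightarrow> complex \<Rightarrow> nat \<Rightarrow> complex" where
  "comb_partial L z b = (\<Sum>x\<leftarrow>L. fst x z * mz_partial (snd x) z b)"

definition comb_series :: "lin_comb \<Rightarrow> complex \<Rightarrow> complex" where
  "comb_series L z = (\<Sum>x\<leftarrow>L. fst x z * mz_series (snd x) z)"

definition prefix_comb :: "(int \<times> nat) list \<Rightarrow> lin_comb \<Rightarrow> lin_comb" where
  "prefix_comb pre L = map (\<lambda>x. (fst x, pre @ snd x)) L"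

definition neg_comb :: "lin_comb \<Rightarrow> lin_comb" where
  "neg_comb L = map (\<lambda>x. (\<lambda>z. - fst x z, snd x)) L"

definition binomial_comb :: "nat \<Rightarrow> nat \<Rightarrow> (nat \<Rightarrow> (int \<times> nat) list) \<Rightarrow> lin_comb" where
  "binomial_comb p r Q = map (\<lambda>e. (\<lambda>z. of_nat (p choose e) * exp_moment r e z, Q e)) [0..<Suc p]"

lemma comb_partial_Nil [simp]: "comb_partial [] z b = 0"
  by (simp add: comb_partial_def)

lemma comb_partial_Cons [simp]:
  "comb_partial (x # L) z b = fst x z * mz_partial (snd x) z b + comb_partial L z b"
  by (simp add: comb_partial_def)

lemma comb_partial_append [simp]:
  "comb_partial (L1 @ L2) z b = comb_partial L1 z b + comb_partial L2 z b"
  by (simp add: comb_partial_def)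

lemma comb_partial_neg_comb [simp]: "comb_partial (neg_comb L) z b = - comb_partial L z b"
  by (induction L) (simp_all add: neg_comb_def)

lemma comb_partial_binomial_comb:
  "comb_partial (binomial_comb p r Q) z b
     = (\<Sum>e\<le>p. of_nat (p choose e) * exp_moment r e z * mz_partial (Q e) z b)"
proof -
  have "comb_partial (binomial_comb p r Q) z b
      = (\<Sum>e\<leftarrow>[0..<Suc p]. of_nat (p choose e) * exp_moment r e z * mz_partial (Q e) z b)"
    by (simp add: comb_partial_def binomial_comb_def o_def del: upt_Suc)
  also have "\<dots> = (\<Sum>e\<in>set [0..<Suc p]. of_nat (p choose e) * exp_moment r e z * mz_partial (Q e) z b)"
    by (rule interv_sum_list_conv_sum_set_nat)
  also have "set [0..<Suc p] = {..p}" by auto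
  finally show ?thesis .
qed

lemma comb_partial_prefix_Cons:
  "comb_partial (prefix_comb [q] L) z b = (\<Sum>n\<in>{1..<b}. mz_factor q z n * comb_partial L z n)"
  by (induction L) (simp_all add: prefix_comb_def sum.distrib sum_distrib_left distrib_left mult_ac)

lemma mz_partial_append_eq_comb_partial:
  assumes "\<And>n. 1 \<le> n \<Longrightarrow> mz_partial qs z n = comb_partial L z n" "1 \<le> b"
  shows "mz_partial (pre @ qs) z b = comb_partial (prefix_comb pre L) z b"
  using assms(2)
proof (induction pre arbitrary: b)
  case Nil
  then show ?case by (simp add: assms(1) prefix_comb_def)
next
  case (Cons q pre)
  have "mz_partial ((q # pre) @ qs) z b
      = (\<Sum>n\<in>{1..<b}. mz_factor q z n * comb_partial (prefix_comb pre L) z n)"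
    by (simp add: Cons.IH)
  also have "\<dots> = comb_partial (prefix_comb [q] (prefix_comb pre L)) z b"
    by (rule comb_partial_prefix_Cons[symmetric])
  finally show ?case by (simp add: prefix_comb_def o_def)
qed

lemma comb_partial_tendsto:
  assumes "Re z < 0" "\<forall>x\<in>set L. \<forall>q\<in>set (snd x). 0 < snd q"
  shows "comb_partial L z \<longlonglongrightarrow> comb_series L z"
  using assms(2)
proof (induction L)
  case Nil
  then show ?case by (simp add: comb_series_def comb_partial_def[abs_def])
next
  case (Cons x L)
  then have "(\<lambda>b. fst x z * mz_partial (snd x) z b + comb_partial L z b)
      \<longlonglongrightarrow> fst x z * mz_series (snd x) z + comb_series L z"
    by (intro tendsto_add tendsto_mult_left mz_partial_tendsto assms(1)) auto
  then show ?case by (simp add: comb_series_def)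
qed

text \<open>The bound on exponents passes nonpositivity of all exponents from \<open>ref\<close> to the lists of \<open>L\<close>.\<close>
definition admissible_comb :: "nat \<Rightarrow> (int \<times> nat) list \<Rightarrow> lin_comb \<Rightarrow> bool" where
  "admissible_comb k ref L \<longleftrightarrow> (\<forall>x\<in>set L. laurent_germ (fst x) \<and> length (snd x) = k \<and>
     (\<forall>q\<in>set (snd x). 0 < snd q \<and> (\<exists>q'\<in>set ref. fst q \<le> fst q')))"

lemma admissible_comb_pos:
  "admissible_comb k ref L \<Longrightarrow> \<forall>x\<in>set L. \<forall>q\<in>set (snd x). 0 < snd q"
  by (simp add: admissible_comb_def)

lemma admissible_comb_append [simp]:
  "admissible_comb k ref (L1 @ L2) \<longleftrightarrow> admissible_comb k ref L1 \<and> admissible_comb k ref L2"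
  by (auto simp: admissible_comb_def)

lemma admissible_comb_neg_comb:
  "admissible_comb k ref L \<Longrightarrow> admissible_comb k ref (neg_comb L)"
  unfolding admissible_comb_def neg_comb_def
  by (auto intro: laurent_germ_mult[OF laurent_germ_const, of _ "-1", simplified])

lemma admissible_comb_prefix_comb:
  assumes "admissible_comb k ref L" "\<forall>q\<in>set pre. 0 < snd q"
  shows "admissible_comb (length pre + k) (pre @ ref) (prefix_comb pre L)"
  using assms by (force simp: admissible_comb_def prefix_comb_def)

lemma admissible_comb_binomial_comb:
  assumes "0 < r" "\<And>e. e \<le> p \<Longrightarrow> length (Q e) = k"
    "\<And>e. e \<le> p \<Longrightarrow> \<forall>q\<in>set (Q e). 0 < snd q \<and> (\<exists>q'\<in>set ref. fst q \<le> fst q')"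
  shows "admissible_comb k ref (binomial_comb p r Q)"
  unfolding admissible_comb_def
proof
  fix x assume "x \<in> set (binomial_comb p r Q)"
  then obtain e where e: "e \<le> p" "x = (\<lambda>z. of_nat (p choose e) * exp_moment r e z, Q e)"
    by (auto simp: binomial_comb_def less_Suc_eq_le simp del: upt_Suc)
  have "laurent_germ (\<lambda>z. of_nat (p choose e) * exp_moment r e z)"
    by (intro laurent_germ_mult laurent_germ_const laurent_germ_exp_moment assms(1))
  with assms(2,3)[OF e(1)] e(2)
  show "laurent_germ (fst x) \<and> length (snd x) = k \<and>
      (\<forall>q\<in>set (snd x). 0 < snd q \<and> (\<exists>q'\<in>set ref. fst q \<le> fst q'))"
    by simp
qed

lemma sum_nested_swap:
  fixes f g :: "nat \<Rightarrow> 'a::comm_semiring_0"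
  shows "(\<Sum>n\<in>{1..<b}. f n * (\<Sum>m\<in>{1..<n}. g m)) = (\<Sum>m\<in>{1..<b}. g m * (\<Sum>n\<in>{Suc m..<b}. f n))"
proof -
  have "(\<Sum>n\<in>{1..<b}. f n * (\<Sum>m\<in>{1..<n}. g m))
      = (\<Sum>n\<in>{1..<b}. \<Sum>m\<in>{m \<in> {1..<b}. m < n}. f n * g m)"
  proof (intro sum.cong refl)
    fix n assume "n \<in> {1..<b}"
    then have "{m \<in> {1..<b}. m < n} = {1..<n}" by auto
    then show "f n * (\<Sum>m\<in>{1..<n}. g m) = (\<Sum>m\<in>{m \<in> {1..<b}. m < n}. f n * g m)"
      by (simp add: sum_distrib_left)
  qed
  also have "\<dots> = (\<Sum>m\<in>{1..<b}. \<Sum>n\<in>{n \<in> {1..<b}. m < n}. f n * g m)"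
    by (rule sum.swap_restrict) auto
  also have "\<dots> = (\<Sum>m\<in>{1..<b}. g m * (\<Sum>n\<in>{Suc m..<b}. f n))"
  proof (intro sum.cong refl)
    fix m assume "m \<in> {1..<b}"
    then have "{n \<in> {1..<b}. m < n} = {Suc m..<b}" by auto
    then show "(\<Sum>n\<in>{n \<in> {1..<b}. m < n}. f n * g m) = g m * (\<Sum>n\<in>{Suc m..<b}. f n)"
      by (simp add: sum_distrib_left mult.commute)
  qed
  finally show ?thesis .
qed

lemma exp_moment_tail_step:
  assumes "Re z < 0" "0 < r" "1 \<le> n"
  shows "exp_moment_tail p r z n = mz_factor (- int p, r) z n
           + (\<Sum>e\<le>p. of_nat (p choose e) * exp_moment r e z * mz_factor (- int (p - e), r) z n)"
proof -
  have "exp_moment_tail p r z n = mz_factor (- int p, r) z n + exp_moment_tail p r z (Suc n)"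
    using assms(3) by (simp add: exp_moment_tail_def)
  then show ?thesis by (simp add: exp_moment_tail_Suc[OF assms(1,2)])
qed

lemma mz_partial_neg_head_Cons:
  assumes "Re z < 0" "0 < r"
  shows "mz_partial ((- int p, r) # (s, r') # qs) z b
    = comb_partial (binomial_comb p r (\<lambda>e. (s - int (p - e), r' + r) # qs)) z b
      - exp_moment_tail p r z b * mz_partial ((s, r') # qs) z b"
proof -
  define f where "f n = mz_factor (- int p, r) z n" for n
  define g where "g m = mz_factor (s, r') z m * mz_partial qs z m" for m
  define h where "h e m = mz_factor (s - int (p - e), r' + r) z m * mz_partial qs z m" for e m
  have "g m * (\<Sum>n\<in>{Suc m..<b}. f n)
      = (\<Sum>e\<le>p. of_nat (p choose e) * exp_moment r e z * h e m) - exp_moment_tail p r z b * g m"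
    if m: "m \<in> {1..<b}" for m
  proof -
    have "(\<Sum>n\<in>{Suc m..<b}. f n) = mz_partial [(- int p, r)] z b - mz_partial [(- int p, r)] z (Suc m)"
      using m sum.atLeastLessThan_concat[of 1 "Suc m" b f] by (simp add: f_def eq_diff_eq add_ac)
    also have "\<dots> = exp_moment_tail p r z (Suc m) - exp_moment_tail p r z b"
      by (simp add: exp_moment_tail_def)
    finally have "g m * (\<Sum>n\<in>{Suc m..<b}. f n)
        = (\<Sum>e\<le>p. of_nat (p choose e) * exp_moment r e z *
             (mz_factor (s, r') z m * mz_factor (- int (p - e), r) z m) * mz_partial qs z m)
          - exp_moment_tail p r z b * g m"
      by (simp add: exp_moment_tail_Suc[OF assms] g_def right_diff_distrib sum_distrib_left mult_ac)
    moreover have "mz_factor (s, r') z m * mz_factor (- int (p - e), r) z m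
        = mz_factor (s - int (p - e), r' + r) z m" for e
      using mz_factor_mult[of m s r' z "- int (p - e)" r] m by simp
    ultimately show ?thesis by (simp only: h_def mult.assoc)
  qed
  then have swapped: "(\<Sum>m\<in>{1..<b}. g m * (\<Sum>n\<in>{Suc m..<b}. f n))
      = (\<Sum>e\<le>p. of_nat (p choose e) * exp_moment r e z * (\<Sum>m\<in>{1..<b}. h e m))
        - exp_moment_tail p r z b * (\<Sum>m\<in>{1..<b}. g m)"
    by (simp add: sum_subtractf sum_distrib_left sum.swap[of _ "{..p}"])
  have "mz_partial ((- int p, r) # (s, r') # qs) z b
      = (\<Sum>n\<in>{1..<b}. f n * (\<Sum>m\<in>{1..<n}. g m))"
    by (simp add: f_def g_def)
  also have "\<dots> = (\<Sum>m\<in>{1..<b}. g m * (\<Sum>n\<in>{Suc m..<b}. f n))"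
    by (rule sum_nested_swap)
  also have "\<dots> = comb_partial (binomial_comb p r (\<lambda>e. (s - int (p - e), r' + r) # qs)) z b
      - exp_moment_tail p r z b * mz_partial ((s, r') # qs) z b"
    unfolding swapped by (simp add: comb_partial_binomial_comb h_def g_def)
  finally show ?thesis .
qed

definition absorbed_comb :: "int \<Rightarrow> nat \<Rightarrow> nat \<Rightarrow> nat \<Rightarrow> lin_comb \<Rightarrow> (int \<times> nat) list \<Rightarrow> lin_comb" where
  "absorbed_comb s r' p r L V = prefix_comb [(s, r')] L @
     neg_comb ((\<lambda>_. 1, (s - int p, r' + r) # V) # binomial_comb p r (\<lambda>e. (s - int (p - e), r' + r) # V))"

lemma mz_partial_absorb_tail:
  assumes "Re z < 0" "0 < r"
    "\<And>n. 1 \<le> n \<Longrightarrow> mz_partial X z n = comb_partial L z n - exp_moment_tail p r z n * mz_partial V z n"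
  shows "mz_partial ((s, r') # X) z b = comb_partial (absorbed_comb s r' p r L V) z b"
proof -
  have absorb: "mz_factor (s, r') z n * exp_moment_tail p r z n
      = mz_factor (s - int p, r' + r) z n
        + (\<Sum>e\<le>p. of_nat (p choose e) * exp_moment r e z * mz_factor (s - int (p - e), r' + r) z n)"
    if n: "1 \<le> n" for n
  proof -
    have merge: "mz_factor (s, r') z n * (c * mz_factor (- int k, r) z n) = c * mz_factor (s - int k, r' + r) z n"
      for c k
      using mz_factor_mult[OF n, of s r' z "- int k" r] by simp
    show ?thesis
      using merge[of 1 p]
      by (simp only: exp_moment_tail_step[OF assms(1,2) n] distrib_left sum_distrib_left merge mult_1)
  qed
  have "mz_partial ((s, r') # X) z b
      = (\<Sum>n\<in>{1..<b}. mz_factor (s, r') z n * comb_partial L z n)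
        - (\<Sum>n\<in>{1..<b}. mz_factor (s, r') z n * exp_moment_tail p r z n * mz_partial V z n)"
    using assms(3) by (simp add: right_diff_distrib sum_subtractf mult.assoc)
  also have "(\<Sum>n\<in>{1..<b}. mz_factor (s, r') z n * exp_moment_tail p r z n * mz_partial V z n)
      = (\<Sum>n\<in>{1..<b}. mz_factor (s - int p, r' + r) z n * mz_partial V z n
          + (\<Sum>e\<le>p. of_nat (p choose e) * exp_moment r e z *
               (mz_factor (s - int (p - e), r' + r) z n * mz_partial V z n)))"
    by (intro sum.cong refl) (simp add: absorb distrib_right sum_distrib_right mult.assoc)
  also have "\<dots> = mz_partial ((s - int p, r' + r) # V) z b
      + comb_partial (binomial_comb p r (\<lambda>e. (s - int (p - e), r' + r) # V)) z b"
    by (simp add: sum.distrib comb_partial_binomial_comb sum_distrib_left sum.swap[of _ "{..p}"])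
  finally show ?thesis
    by (simp add: absorbed_comb_def comb_partial_prefix_Cons)
qed

lemma mz_partial_neg_head:
  assumes "0 < r" "\<forall>q\<in>set post. 0 < snd q"
  obtains L where "admissible_comb (length post) post L"
    "\<And>z n. Re z < 0 \<Longrightarrow> mz_partial ((- int p, r) # post) z n
       = comb_partial L z n - exp_moment_tail p r z n * mz_partial post z n"
proof (cases post)
  case Nil
  show ?thesis
  proof (rule that)
    show "admissible_comb (length post) post [(exp_moment r p, [])]"
      using laurent_germ_exp_moment[OF assms(1)] Nil by (simp add: admissible_comb_def)
    show "mz_partial ((- int p, r) # post) z n = comb_partial [(exp_moment r p, [])] z n
        - exp_moment_tail p r z n * mz_partial post z n" for z n
      using Nil by (simp add: exp_moment_tail_def)
  qed
next
  case (Cons q qs)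
  obtain s r' where q: "q = (s, r')" by fastforce
  let ?L = "binomial_comb p r (\<lambda>e. (s - int (p - e), r' + r) # qs)"
  have "admissible_comb (length post) post ?L"
  proof (rule admissible_comb_binomial_comb[OF assms(1)])
    fix e
    show "length ((s - int (p - e), r' + r) # qs) = length post" by (simp add: Cons)
    have "s - int (p - e) \<le> fst q" by (simp add: q)
    then show "\<forall>q'\<in>set ((s - int (p - e), r' + r) # qs). 0 < snd q' \<and> (\<exists>q''\<in>set post. fst q' \<le> fst q'')"
      using assms(2) by (auto simp: Cons q)
  qed
  moreover have "mz_partial ((- int p, r) # post) z n
      = comb_partial ?L z n - exp_moment_tail p r z n * mz_partial post z n" if "Re z < 0" for z n
    unfolding Cons q by (rule mz_partial_neg_head_Cons[OF that assms(1)])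
  ultimately show ?thesis by (rule that)
qed

lemma admissible_comb_absorbed_comb:
  assumes "admissible_comb (length V) V L" "0 < r" "0 < r'" "\<forall>q\<in>set V. 0 < snd q"
  shows "admissible_comb (Suc (length V)) ((s, r') # V) (absorbed_comb s r' p r L V)"
proof -
  have merged: "\<forall>q\<in>set ((s - int k, r' + r) # V). 0 < snd q \<and> (\<exists>q'\<in>set ((s, r') # V). fst q \<le> fst q')"
    for k
  proof
    fix q assume "q \<in> set ((s - int k, r' + r) # V)"
    then consider "q = (s - int k, r' + r)" | "q \<in> set V" by auto
    then show "0 < snd q \<and> (\<exists>q'\<in>set ((s, r') # V). fst q \<le> fst q')"
    proof cases
      case 1
      then show ?thesis using assms(2) by auto
    next
      case 2
      then show ?thesis using assms(4) by auto
    qed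
  qed
  let ?k = "Suc (length V)" and ?ref = "(s, r') # V"
  have "admissible_comb ?k ?ref [(\<lambda>_. 1, (s - int p, r' + r) # V)]"
    using merged[of p] by (simp add: admissible_comb_def laurent_germ_const)
  moreover have "admissible_comb ?k ?ref (binomial_comb p r (\<lambda>e. (s - int (p - e), r' + r) # V))"
    using merged by (intro admissible_comb_binomial_comb assms(2)) simp_all
  ultimately have "admissible_comb ?k ?ref (neg_comb ((\<lambda>_. 1, (s - int p, r' + r) # V) #
      binomial_comb p r (\<lambda>e. (s - int (p - e), r' + r) # V)))"
    using admissible_comb_append[of ?k ?ref "[(\<lambda>_. 1, (s - int p, r' + r) # V)]"]
    by (simp add: admissible_comb_neg_comb)
  moreover have "admissible_comb ?k ?ref (prefix_comb [(s, r')] L)"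
    using admissible_comb_prefix_comb[OF assms(1), of "[(s, r')]"] assms(3) by simp
  ultimately show ?thesis
    by (simp add: absorbed_comb_def)
qed

lemma mz_series_eq_comb_series:
  assumes "Re z < 0" "\<forall>q\<in>set qs. 0 < snd q" "admissible_comb k ref L"
    "(\<lambda>n. mz_partial qs z n - comb_partial L z n) \<longlonglongrightarrow> 0"
  shows "mz_series qs z = comb_series L z"
proof -
  have "(\<lambda>n. mz_partial qs z n - comb_partial L z n) \<longlonglongrightarrow> mz_series qs z - comb_series L z"
    by (intro tendsto_diff mz_partial_tendsto comb_partial_tendsto admissible_comb_pos[OF assms(3)] assms(1,2))
  with assms(4) show ?thesis
    using LIMSEQ_unique by fastforce
qed

lemma mz_series_reduction:
  assumes "\<forall>q\<in>set (pre @ (- int p, r) # post). 0 < snd q"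
  obtains L where "admissible_comb (length pre + length post) (pre @ post) L"
    "\<And>z. Re z < 0 \<Longrightarrow> mz_series (pre @ (- int p, r) # post) z = comb_series L z"
proof -
  have r: "0 < r" and pos_pre: "\<forall>q\<in>set pre. 0 < snd q" and pos_post: "\<forall>q\<in>set post. 0 < snd q"
    using assms by auto
  obtain L1 where L1: "admissible_comb (length post) post L1"
    and head: "\<And>z n. Re z < 0 \<Longrightarrow> mz_partial ((- int p, r) # post) z n
       = comb_partial L1 z n - exp_moment_tail p r z n * mz_partial post z n"
    using mz_partial_neg_head[OF r pos_post] by blast
  show ?thesis
  proof (cases pre rule: rev_cases)
    case Nil
    show ?thesis
    proof (rule that)
      show "admissible_comb (length pre + length post) (pre @ post) L1"
        using L1 Nil by simp
      fix z :: complex assume z: "Re z < 0"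
      have "(\<lambda>n. - (exp_moment_tail p r z n * mz_partial post z n)) \<longlonglongrightarrow> - (0 * mz_series post z)"
        by (intro tendsto_minus tendsto_mult exp_moment_tail_tendsto_0 mz_partial_tendsto z r pos_post)
      moreover have "(\<lambda>n. mz_partial ((- int p, r) # post) z n - comb_partial L1 z n)
          = (\<lambda>n. - (exp_moment_tail p r z n * mz_partial post z n))"
        by (rule ext) (simp only: head[OF z], simp)
      ultimately show "mz_series (pre @ (- int p, r) # post) z = comb_series L1 z"
        using mz_series_eq_comb_series[OF z assms L1] Nil by simp
    qed
  next
    case (snoc pre' q0)
    obtain s r' where q0: "q0 = (s, r')" by fastforce
    have r': "0 < r'" using pos_pre snoc q0 by simp
    define L where "L = prefix_comb pre' (absorbed_comb s r' p r L1 post)"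
    from admissible_comb_prefix_comb[OF admissible_comb_absorbed_comb[OF L1 r r' pos_post], of pre']
    have adm: "admissible_comb (length pre + length post) (pre @ post) L"
      unfolding L_def using pos_pre snoc q0 by simp
    show ?thesis
    proof (rule that[OF adm])
      fix z :: complex assume z: "Re z < 0"
      have "mz_partial ((s, r') # (- int p, r) # post) z n = comb_partial (absorbed_comb s r' p r L1 post) z n"
        for n
        by (rule mz_partial_absorb_tail[OF z r head[OF z]])
      then have "mz_partial (pre @ (- int p, r) # post) z n = comb_partial L z n" if "1 \<le> n" for n
        unfolding L_def using mz_partial_append_eq_comb_partial[OF _ that] snoc q0 by simp
      then have "\<forall>\<^sub>F n in sequentially. 0 = mz_partial (pre @ (- int p, r) # post) z n - comb_partial L z n"
        by (intro eventually_sequentiallyI[of 1]) simp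
      from Lim_transform_eventually[OF tendsto_const this]
      show "mz_series (pre @ (- int p, r) # post) z = comb_series L z"
        by (rule mz_series_eq_comb_series[OF z assms adm])
    qed
  qed
qed

section \<open>Induction on the depth\<close>

lemma log_laurent_germ_comb_series:
  assumes "admissible_comb k ref L" "\<And>x. x \<in> set L \<Longrightarrow> log_laurent_germ (mz_series (snd x))"
  shows "log_laurent_germ (comb_series L)"
  unfolding comb_series_def[abs_def] using assms
  by (intro log_laurent_germ_sum_list log_laurent_germ_mult) (auto simp: admissible_comb_def)

lemma laurent_germ_comb_series:
  assumes "admissible_comb k ref L" "\<And>x. x \<in> set L \<Longrightarrow> laurent_germ (mz_series (snd x))"
  shows "laurent_germ (comb_series L)"
  unfolding comb_series_def[abs_def] using assms
  by (intro laurent_germ_sum_list laurent_germ_mult) (auto simp: admissible_comb_def)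

lemma mz_series_germs_if_nonpos_entry:
  assumes IH: "\<And>qs'. length qs' = k \<Longrightarrow> \<forall>q\<in>set qs'. 0 < snd q \<Longrightarrow>
      log_laurent_germ (mz_series qs') \<and> ((\<forall>q\<in>set qs'. fst q \<le> 0) \<longrightarrow> laurent_germ (mz_series qs'))"
    and qs: "length qs = Suc k" "\<forall>q\<in>set qs. 0 < snd q" "q \<in> set qs" "fst q \<le> 0"
  shows "log_laurent_germ (mz_series qs) \<and> ((\<forall>q\<in>set qs. fst q \<le> 0) \<longrightarrow> laurent_germ (mz_series qs))"
proof -
  obtain pre post where split: "qs = pre @ (- int (nat (- fst q)), snd q) # post"
    using split_list[OF qs(3)] qs(4) by (metis prod.collapse int_nat_eq minus_minus neg_0_le_iff_le)
  obtain L where adm: "admissible_comb (length pre + length post) (pre @ post) L"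
    and eq: "\<And>z. Re z < 0 \<Longrightarrow> mz_series qs z = comb_series L z"
    using mz_series_reduction[of pre _ _ post] qs(2) unfolding split by blast
  have agree: "\<forall>\<^sub>F z in at_0_lhp. comb_series L z = mz_series qs z"
    using eventually_Re_neg_at_0_lhp by eventually_elim (simp add: eq)
  have IH_L: "log_laurent_germ (mz_series (snd x)) \<and>
      ((\<forall>q\<in>set qs. fst q \<le> 0) \<longrightarrow> laurent_germ (mz_series (snd x)))" if "x \<in> set L" for x
  proof -
    have "length (snd x) = k" "\<forall>q\<in>set (snd x). 0 < snd q"
      and dom: "\<forall>q\<in>set (snd x). \<exists>q'\<in>set (pre @ post). fst q \<le> fst q'"
      using adm that qs(1) split by (auto simp: admissible_comb_def)
    moreover have "\<forall>q\<in>set (snd x). fst q \<le> 0" if nonpos: "\<forall>q\<in>set qs. fst q \<le> 0"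
    proof
      fix q' assume "q' \<in> set (snd x)"
      with dom obtain q'' where "q'' \<in> set (pre @ post)" "fst q' \<le> fst q''" by blast
      moreover from this(1) have "q'' \<in> set qs" by (auto simp: split)
      ultimately show "fst q' \<le> 0" using nonpos by force
    qed
    ultimately show ?thesis using IH by blast
  qed
  have "log_laurent_germ (comb_series L)"
    using IH_L by (intro log_laurent_germ_comb_series[OF adm]) blast
  moreover have "laurent_germ (comb_series L)" if "\<forall>q\<in>set qs. fst q \<le> 0"
    using IH_L that by (intro laurent_germ_comb_series[OF adm]) blast
  ultimately show ?thesis
    using log_laurent_germ_cong[OF _ agree] laurent_germ_cong[OF _ agree] by blast
qed

lemma log_laurent_germ_mz_series_by_descent:
  assumes nonpos_entry: "\<And>qs. length qs = k \<Longrightarrow> \<forall>q\<in>set qs. 0 < snd q \<Longrightarrow>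
      \<exists>q\<in>set qs. fst q \<le> 0 \<Longrightarrow> log_laurent_germ (mz_series qs)"
  shows "length qs = k \<Longrightarrow> \<forall>q\<in>set qs. 0 < snd q \<Longrightarrow> log_laurent_germ (mz_series qs)"
proof (induction "nat (sum_list (map fst qs))" arbitrary: qs rule: less_induct)
  case less
  show ?case
  proof (cases "\<exists>q\<in>set qs. fst q \<le> 0")
    case True
    then show ?thesis using nonpos_entry less.prems by blast
  next
    case False
    have "log_laurent_germ (mz_series (lower_exponent i qs))" if i: "i < length qs" for i
    proof (rule less.hyps)
      have "qs ! i \<in> set qs" using i by simp
      with False have "1 \<le> fst (qs ! i)" by auto
      also have "fst (qs ! i) \<le> sum_list (map fst qs)"
        using False i by (intro member_le_sum_list) (auto simp: not_le)
      finally show "nat (sum_list (map fst (lower_exponent i qs))) < nat (sum_list (map fst qs))"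
        using i by (simp add: sum_list_fst_lower_exponent)
    qed (use less.prems lower_exponent_pos in simp_all)
    then have "log_laurent_germ (\<lambda>z. \<Sum>i<length qs. of_nat (snd (qs ! i)) * mz_series (lower_exponent i qs) z)"
      by (intro log_laurent_germ_sum log_laurent_germ_cmult) auto
    moreover have "\<forall>\<^sub>F z in at_0_lhp. (mz_series qs has_field_derivative
        (\<Sum>i<length qs. of_nat (snd (qs ! i)) * mz_series (lower_exponent i qs) z)) (at z)"
      using eventually_Re_neg_at_0_lhp
      by eventually_elim (rule has_field_derivative_mz_series[OF _ less.prems(2)])
    ultimately show ?thesis
      by (rule log_laurent_germ_antiderivative)
  qed
qed

lemma mz_series_germs:
  assumes "\<forall>q\<in>set qs. 0 < snd q"
  shows "log_laurent_germ (mz_series qs) \<and> ((\<forall>q\<in>set qs. fst q \<le> 0) \<longrightarrow> laurent_germ (mz_series qs))"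
  using assms
proof (induction "length qs" arbitrary: qs)
  case 0
  then have "mz_series qs = (\<lambda>_. 1)" by (simp add: fun_eq_iff)
  then show ?case by (simp add: laurent_germ_const log_laurent_germ_const)
next
  case (Suc k)
  have nonpos_entry: "log_laurent_germ (mz_series qs') \<and>
      ((\<forall>q\<in>set qs'. fst q \<le> 0) \<longrightarrow> laurent_germ (mz_series qs'))"
    if "length qs' = Suc k" "\<forall>q\<in>set qs'. 0 < snd q" "\<exists>q\<in>set qs'. fst q \<le> 0" for qs'
    using that mz_series_germs_if_nonpos_entry[of k qs'] Suc.hyps(1) by metis
  show ?case
  proof (cases "\<exists>q\<in>set qs. fst q \<le> 0")
    case True
    then show ?thesis using nonpos_entry[of qs] Suc.hyps(2) Suc.prems by simp
  next
    case False
    have "log_laurent_germ (mz_series qs)"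
    proof (rule log_laurent_germ_mz_series_by_descent)
      show "log_laurent_germ (mz_series qs')"
        if "length qs' = Suc k" "\<forall>q\<in>set qs'. 0 < snd q" "\<exists>q\<in>set qs'. fst q \<le> 0" for qs'
        using nonpos_entry[OF that] by blast
    qed (use Suc.hyps(2) Suc.prems in simp_all)
    moreover have "\<not> (\<forall>q\<in>set qs. fst q \<le> 0)"
      using False Suc.hyps(2) by (cases qs) auto
    ultimately show ?thesis by blast
  qed
qed

theorem theorem3p3:
  fixes s :: "int list" and r :: "nat list"
  assumes "length r = length s"
    and "\<forall>x\<in>set r. 0 < x"
  shows "in_laurent_log (Zfun s r)
         \<and> ((\<forall>x\<in>set s. x \<le> 0) \<longrightarrow> in_laurent (Zfun s r))"
proof -
  have pos: "\<forall>q\<in>set (zip s r). 0 < snd q"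
    using assms(2) by (auto dest: set_zip_rightD)
  have nonpos: "\<forall>q\<in>set (zip s r). fst q \<le> 0" if "\<forall>x\<in>set s. x \<le> 0"
    using that by (auto dest: set_zip_leftD)
  from mz_series_germs[OF pos] nonpos show ?thesis
    unfolding Zfun_eq_mz_series[OF assms(1)]
    by (auto intro: in_laurent_log_if_log_laurent_germ in_laurent_if_laurent_germ)
qed

end
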